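(* Let $C$ be a coalgebra over a field and $A=C^*$. Assume there are infinitely many isomorphism types of simple rational right (equivalently, of simple rational left) $A$-modules. Then there exist simple left $A$-modules that are not rational, and also simple right $A$-modules that are not rational.
   Context: Every right (left) $C$-comodule is a left (right) $C^*$-module via $f\rightharpoonup m=\sum m_0f(m_1)$ (resp. $m\leftharpoonup f=\sum f(m_{-1})m_0$); the left (right) $C^*$-modules arising this way are called rational. *)

theory Defs
  imports Main "HOL.Vector_Spaces"
begin

text \<open>
Tensors are represented by finite lists of pairs (finite sums of elementary tensors);
two such representatives denote the same tensor iff all products of linear functionals
agree on them (functionals separate tensors of vector spaces).  Thus the comultiplication
is delta :: 'c => ('c * 'c) list, with delta c = [(c1,c2),...] meaning Sum c1 (x) c2.
\<close>

definition lfun :: "('k::field \<Rightarrow> 'c::ab_group_add \<Rightarrow> 'c) \<Rightarrow> ('c \<Rightarrow> 'k) \<Rightarrow> bool" where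
  "lfun sc f \<longleftrightarrow> Vector_Spaces.linear sc ((*) :: 'k \<Rightarrow> 'k \<Rightarrow> 'k) f"

definition teq2 :: "('k::field \<Rightarrow> 'c::ab_group_add \<Rightarrow> 'c) \<Rightarrow> ('c \<times> 'c) list \<Rightarrow> ('c \<times> 'c) list \<Rightarrow> bool" where
  "teq2 sc xs ys \<longleftrightarrow> (\<forall>f g. lfun sc f \<and> lfun sc g \<longrightarrow>
      (\<Sum>(u,v)\<leftarrow>xs. f u * g v) = (\<Sum>(u,v)\<leftarrow>ys. f u * g v))"

definition coalgebra :: "('k::field \<Rightarrow> 'c::ab_group_add \<Rightarrow> 'c) \<Rightarrow> ('c \<Rightarrow> ('c \<times> 'c) list) \<Rightarrow> ('c \<Rightarrow> 'k) \<Rightarrow> bool" where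
  "coalgebra sc delta eps \<longleftrightarrow>
     vector_space sc \<and> lfun sc eps \<and>
     (\<forall>x y. teq2 sc (delta (x + y)) (delta x @ delta y)) \<and>
     (\<forall>a x. teq2 sc (delta (sc a x)) (map (\<lambda>(u,v). (sc a u, v)) (delta x))) \<and>
     (\<forall>x f g h. lfun sc f \<and> lfun sc g \<and> lfun sc h \<longrightarrow>
        (\<Sum>(u,v)\<leftarrow>delta x. (\<Sum>(p,q)\<leftarrow>delta u. f p * g q) * h v) =
        (\<Sum>(u,v)\<leftarrow>delta x. f u * (\<Sum>(p,q)\<leftarrow>delta v. g p * h q))) \<and>
     (\<forall>x. (\<Sum>(u,v)\<leftarrow>delta x. sc (eps u) v) = x) \<and>
     (\<forall>x. (\<Sum>(u,v)\<leftarrow>delta x. sc (eps v) u) = x)"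

definition dualC :: "('k::field \<Rightarrow> 'c::ab_group_add \<Rightarrow> 'c) \<Rightarrow> ('c \<Rightarrow> 'k) set" where
  "dualC sc = {f. lfun sc f}"

definition conv :: "('c \<Rightarrow> ('c \<times> 'c) list) \<Rightarrow> ('c \<Rightarrow> 'k::field) \<Rightarrow> ('c \<Rightarrow> 'k) \<Rightarrow> 'c \<Rightarrow> 'k" where
  "conv delta f g = (\<lambda>x. \<Sum>(u,v)\<leftarrow>delta x. f u * g v)"

text \<open>Modules over A, given by a carrier set, zero, addition and an action of A.
  For right modules, act f m denotes m acted on from the right by f.\<close>
record ('a,'m) amod =
  carr :: "'m set"
  zer  :: 'm
  pls  :: "'m \<Rightarrow> 'm \<Rightarrow> 'm"
  act  :: "'a \<Rightarrow> 'm \<Rightarrow> 'm"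

definition is_amod :: "('k::field \<Rightarrow> 'c::ab_group_add \<Rightarrow> 'c) \<Rightarrow> (('c \<Rightarrow> 'k) \<Rightarrow> ('c \<Rightarrow> 'k) \<Rightarrow> ('c \<Rightarrow> 'k))
     \<Rightarrow> ('c \<Rightarrow> 'k) \<Rightarrow> ('c \<Rightarrow> 'k, 'm) amod \<Rightarrow> bool" where
  "is_amod sc mul one M \<longleftrightarrow>
     zer M \<in> carr M \<and>
     (\<forall>x\<in>carr M. \<forall>y\<in>carr M. pls M x y \<in> carr M) \<and>
     (\<forall>x\<in>carr M. \<forall>y\<in>carr M. \<forall>z\<in>carr M. pls M (pls M x y) z = pls M x (pls M y z)) \<and>
     (\<forall>x\<in>carr M. \<forall>y\<in>carr M. pls M x y = pls M y x) \<and>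
     (\<forall>x\<in>carr M. pls M (zer M) x = x) \<and>
     (\<forall>x\<in>carr M. \<exists>y\<in>carr M. pls M x y = zer M) \<and>
     (\<forall>f\<in>dualC sc. \<forall>x\<in>carr M. act M f x \<in> carr M) \<and>
     (\<forall>f\<in>dualC sc. \<forall>x\<in>carr M. \<forall>y\<in>carr M. act M f (pls M x y) = pls M (act M f x) (act M f y)) \<and>
     (\<forall>f\<in>dualC sc. \<forall>g\<in>dualC sc. \<forall>x\<in>carr M. act M (\<lambda>c. f c + g c) x = pls M (act M f x) (act M g x)) \<and>
     (\<forall>f\<in>dualC sc. \<forall>g\<in>dualC sc. \<forall>x\<in>carr M. act M (mul f g) x = act M f (act M g x)) \<and>
     (\<forall>x\<in>carr M. act M one x = x)"

text \<open>Left A-modules: (f*g).m = f.(g.m).  Right A-modules: m.(f*g) = (m.f).g,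
  i.e. act (f*g) m = act g (act f m), a module over the opposite ring.\<close>
definition left_amod where
  "left_amod sc delta eps M \<longleftrightarrow> is_amod sc (conv delta) eps M"

definition right_amod where
  "right_amod sc delta eps M \<longleftrightarrow> is_amod sc (\<lambda>f g. conv delta g f) eps M"

definition submod :: "('k::field \<Rightarrow> 'c::ab_group_add \<Rightarrow> 'c) \<Rightarrow> ('c \<Rightarrow> 'k, 'm) amod \<Rightarrow> 'm set \<Rightarrow> bool" where
  "submod sc M N \<longleftrightarrow> N \<subseteq> carr M \<and> zer M \<in> N \<and>
     (\<forall>x\<in>N. \<forall>y\<in>N. pls M x y \<in> N) \<and> (\<forall>f\<in>dualC sc. \<forall>x\<in>N. act M f x \<in> N)"

definition simple_on :: "('k::field \<Rightarrow> 'c::ab_group_add \<Rightarrow> 'c) \<Rightarrow> ('c \<Rightarrow> 'k, 'm) amod \<Rightarrow> bool" where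
  "simple_on sc M \<longleftrightarrow> carr M \<noteq> {zer M} \<and>
     (\<forall>N. submod sc M N \<longrightarrow> N = {zer M} \<or> N = carr M)"

definition simple_left where
  "simple_left sc delta eps M \<longleftrightarrow> left_amod sc delta eps M \<and> simple_on sc M"

definition simple_right where
  "simple_right sc delta eps M \<longleftrightarrow> right_amod sc delta eps M \<and> simple_on sc M"

definition mod_iso :: "('k::field \<Rightarrow> 'c::ab_group_add \<Rightarrow> 'c) \<Rightarrow> ('c \<Rightarrow> 'k, 'm) amod \<Rightarrow> ('c \<Rightarrow> 'k, 'n) amod \<Rightarrow> bool" where
  "mod_iso sc M N \<longleftrightarrow> (\<exists>h. bij_betw h (carr M) (carr N) \<and>
     (\<forall>x\<in>carr M. \<forall>y\<in>carr M. h (pls M x y) = pls N (h x) (h y)) \<and>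
     (\<forall>f\<in>dualC sc. \<forall>x\<in>carr M. h (act M f x) = act N f (h x)))"

definition msc :: "('c \<Rightarrow> 'k::field) \<Rightarrow> ('c \<Rightarrow> 'k, 'm) amod \<Rightarrow> 'k \<Rightarrow> 'm \<Rightarrow> 'm" where
  "msc eps M a x = act M (\<lambda>c. a * eps c) x"

definition msum :: "('a, 'm) amod \<Rightarrow> 'm list \<Rightarrow> 'm" where
  "msum M xs = foldr (pls M) xs (zer M)"

definition mlin :: "('c \<Rightarrow> 'k::field) \<Rightarrow> ('c \<Rightarrow> 'k, 'm) amod \<Rightarrow> ('m \<Rightarrow> 'k) \<Rightarrow> bool" where
  "mlin eps M phi \<longleftrightarrow> (\<forall>x\<in>carr M. \<forall>y\<in>carr M. phi (pls M x y) = phi x + phi y) \<and>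
     (\<forall>a. \<forall>x\<in>carr M. phi (msc eps M a x) = a * phi x)"

definition right_comod :: "('k::field \<Rightarrow> 'c::ab_group_add \<Rightarrow> 'c) \<Rightarrow> ('c \<Rightarrow> ('c \<times> 'c) list) \<Rightarrow> ('c \<Rightarrow> 'k)
     \<Rightarrow> ('c \<Rightarrow> 'k, 'm) amod \<Rightarrow> ('m \<Rightarrow> ('m \<times> 'c) list) \<Rightarrow> bool" where
  "right_comod sc delta eps M rho \<longleftrightarrow>
     (\<forall>x\<in>carr M. \<forall>(u,c)\<in>set (rho x). u \<in> carr M) \<and>
     (\<forall>x\<in>carr M. \<forall>y\<in>carr M. \<forall>phi f. mlin eps M phi \<and> lfun sc f \<longrightarrow>
        (\<Sum>(u,c)\<leftarrow>rho (pls M x y). phi u * f c) =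
        (\<Sum>(u,c)\<leftarrow>rho x @ rho y. phi u * f c)) \<and>
     (\<forall>a. \<forall>x\<in>carr M. \<forall>phi f. mlin eps M phi \<and> lfun sc f \<longrightarrow>
        (\<Sum>(u,c)\<leftarrow>rho (msc eps M a x). phi u * f c) =
        (\<Sum>(u,c)\<leftarrow>rho x. phi u * f (sc a c))) \<and>
     (\<forall>x\<in>carr M. \<forall>phi f g. mlin eps M phi \<and> lfun sc f \<and> lfun sc g \<longrightarrow>
        (\<Sum>(u,c)\<leftarrow>rho x. (\<Sum>(p,d)\<leftarrow>rho u. phi p * f d) * g c) =
        (\<Sum>(u,c)\<leftarrow>rho x. phi u * (\<Sum>(p,q)\<leftarrow>delta c. f p * g q))) \<and>
     (\<forall>x\<in>carr M. msum M (map (\<lambda>(u,c). msc eps M (eps c) u) (rho x)) = x)"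

definition left_comod :: "('k::field \<Rightarrow> 'c::ab_group_add \<Rightarrow> 'c) \<Rightarrow> ('c \<Rightarrow> ('c \<times> 'c) list) \<Rightarrow> ('c \<Rightarrow> 'k)
     \<Rightarrow> ('c \<Rightarrow> 'k, 'm) amod \<Rightarrow> ('m \<Rightarrow> ('c \<times> 'm) list) \<Rightarrow> bool" where
  "left_comod sc delta eps M lam \<longleftrightarrow>
     (\<forall>x\<in>carr M. \<forall>(c,u)\<in>set (lam x). u \<in> carr M) \<and>
     (\<forall>x\<in>carr M. \<forall>y\<in>carr M. \<forall>phi f. mlin eps M phi \<and> lfun sc f \<longrightarrow>
        (\<Sum>(c,u)\<leftarrow>lam (pls M x y). f c * phi u) =
        (\<Sum>(c,u)\<leftarrow>lam x @ lam y. f c * phi u)) \<and>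
     (\<forall>a. \<forall>x\<in>carr M. \<forall>phi f. mlin eps M phi \<and> lfun sc f \<longrightarrow>
        (\<Sum>(c,u)\<leftarrow>lam (msc eps M a x). f c * phi u) =
        (\<Sum>(c,u)\<leftarrow>lam x. f (sc a c) * phi u)) \<and>
     (\<forall>x\<in>carr M. \<forall>phi f g. mlin eps M phi \<and> lfun sc f \<and> lfun sc g \<longrightarrow>
        (\<Sum>(c,u)\<leftarrow>lam x. (\<Sum>(p,q)\<leftarrow>delta c. f p * g q) * phi u) =
        (\<Sum>(c,u)\<leftarrow>lam x. f c * (\<Sum>(d,p)\<leftarrow>lam u. g d * phi p))) \<and>
     (\<forall>x\<in>carr M. msum M (map (\<lambda>(c,u). msc eps M (eps c) u) (lam x)) = x)"

definition rational_left where
  "rational_left sc delta eps M \<longleftrightarrow> (\<exists>rho. right_comod sc delta eps M rho \<and>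
     (\<forall>f\<in>dualC sc. \<forall>x\<in>carr M. act M f x = msum M (map (\<lambda>(u,c). msc eps M (f c) u) (rho x))))"

definition rational_right where
  "rational_right sc delta eps M \<longleftrightarrow> (\<exists>lam. left_comod sc delta eps M lam \<and>
     (\<forall>f\<in>dualC sc. \<forall>x\<in>carr M. act M f x = msum M (map (\<lambda>(c,u). msc eps M (f c) u) (lam x))))"

end

theory Submission
  imports Defs "HOL-Library.Function_Algebras" "HOL-Library.Set_Algebras"
begin

text \<open>
  A simple rational right A-module M embeds into C, viewed as a right A-module via the hit
  action c \<leftharpoonup> f: for a linear functional \<phi> on M with \<phi>(x) = 1 the coefficient map
  m \<mapsto> \<Sum> \<phi>(m0) m(-1) is an injective module map. Let W(F) be the span of all coefficient
  images of the modules of S outside a finite set F, and J the set of f \<in> A vanishing on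
  some W(F). J is a two-sided ideal not containing eps. It is dense: a finite subset of C lies
  in a finite-dimensional submodule R, and R \<inter> W(F) = 0 for some F, since otherwise a choice
  of F minimising dim (R \<inter> W(F)) yields a simple submodule isomorphic to two different members
  of S. Now let L \<supseteq> J be a maximal left (right) ideal not containing eps. Then A/L is
  simple; were it rational, the class of eps would be annihilated by all f vanishing on some
  finite subset of C, and taking j \<in> L that agrees with eps there gives eps - j \<in> L, so eps \<in> L.
\<close>

lemma field_vector_space: "vector_space ((*) :: 'k::field \<Rightarrow> 'k \<Rightarrow> 'k)"
  by unfold_locales (auto simp: algebra_simps)

context vector_space begin

text \<open>Every b \<in> B survives in the maximal independent extension of a basis BK of K inside
  BK \<union> B, because span B meets K trivially.\<close>

lemma basis_extension_over_subspace:
  assumes K: "subspace K" and B: "independent B" and BK: "span B \<inter> K \<subseteq> {0}"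
  obtains BK BB where "K \<subseteq> span BK" "BK \<subseteq> BB" "B \<subseteq> BB" "B \<inter> BK = {}" "independent BB"
proof -
  obtain BK where BK1: "BK \<subseteq> K" "independent BK" "K \<subseteq> span BK"
    by (rule basis_exists)
  obtain BB where BB: "BK \<subseteq> BB" "BB \<subseteq> BK \<union> B" "independent BB" "BK \<union> B \<subseteq> span BB"
    by (rule maximal_independent_subset_extend[of BK "BK \<union> B"]) (use BK1 in auto)
  have spBK: "span BK \<subseteq> K" using BK1 K span_minimal by blast
  have "B \<subseteq> BB"
  proof
    fix b assume b: "b \<in> B"
    show "b \<in> BB"
    proof (rule ccontr)
      assume nb: "b \<notin> BB"
      have "BB = BK \<union> (BB - BK)" using BB by blast
      hence "b \<in> span (BK \<union> (BB - BK))" using BB b by (metis UnCI subsetD)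
      then obtain k r where kr: "b = k + r" "k \<in> span BK" "r \<in> span (BB - BK)"
        unfolding span_Un by auto
      have "BB - BK \<subseteq> B - {b}" using BB nb by blast
      hence r: "r \<in> span (B - {b})" using kr span_mono by blast
      hence "b - r \<in> span B" using b span_base span_diff span_mono[of "B - {b}" B] by blast
      hence "k = 0" using kr spBK BK by auto
      hence "b \<in> span (B - {b})" using kr r by simp
      thus False using B b dependent_def by blast
    qed
  qed
  moreover have "B \<inter> BK = {}"
  proof (rule ccontr)
    assume "B \<inter> BK \<noteq> {}"
    then obtain b where "b \<in> B" "b \<in> BK" by blast
    hence "b = 0" using BK1 BK span_base by blast
    with \<open>b \<in> B\<close> B show False using dependent_zero by blast
  qed
  ultimately show ?thesis using that BK1(3) BB(1,3) by blast
qed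

lemma linear_functional_extension:
  assumes K: "subspace K" and B: "independent B" and BK: "span B \<inter> K \<subseteq> {0}"
  shows "\<exists>j. Vector_Spaces.linear scale ((*) :: 'a \<Rightarrow> 'a \<Rightarrow> 'a) j \<and> (\<forall>x\<in>K. j x = 0) \<and> (\<forall>b\<in>B. j b = f b)"
proof -
  obtain BK BB where BK: "K \<subseteq> span BK" "BK \<subseteq> BB" "B \<subseteq> BB" "B \<inter> BK = {}" "independent BB"
    using basis_extension_over_subspace[OF assms] by blast
  interpret P: vector_space_pair scale "(*) :: 'a \<Rightarrow> 'a \<Rightarrow> 'a"
    using vector_space_axioms field_vector_space by (simp add: vector_space_pair_def)
  define j where "j = P.construct BB (\<lambda>x. if x \<in> BK then 0 else f x)"
  have lj: "Vector_Spaces.linear scale (*) j" unfolding j_def using BK by (simp add: P.linear_construct)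
  have l0: "Vector_Spaces.linear scale ((*) :: 'a \<Rightarrow> 'a \<Rightarrow> 'a) (\<lambda>x. 0)"
    using vector_space_axioms field_vector_space by (simp add: linear_iff)
  have jBB: "x \<in> BB \<Longrightarrow> j x = (if x \<in> BK then 0 else f x)" for x
    unfolding j_def using BK by (simp add: P.construct_basis)
  have "j b = 0" if "b \<in> BK" for b using that BK(2) jBB by auto
  hence "j x = 0" if "x \<in> K" for x
    using P.linear_eq_on[OF lj l0, of x BK] that BK(1) by blast
  moreover have "j b = f b" if "b \<in> B" for b
  proof -
    have "b \<in> BB" "b \<notin> BK" using that BK(3,4) by auto
    thus ?thesis using jBB by simp
  qed
  ultimately show ?thesis using lj by blast
qed

lemma subspace_eq_if_dim_le:
  assumes X: "subspace X" and XY: "X \<subseteq> Y" and P: "Y \<subseteq> span P" "finite P"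
    and d: "dim Y \<le> dim X"
  shows "X = Y"
proof (rule ccontr)
  assume "X \<noteq> Y"
  then obtain y where y: "y \<in> Y" "y \<notin> X" using XY by blast
  obtain BX where BX: "BX \<subseteq> X" "independent BX" "X \<subseteq> span BX" "card BX = dim X"
    by (rule basis_exists)
  obtain BY where BY: "BY \<subseteq> Y" "independent BY" "Y \<subseteq> span BY" "card BY = dim Y"
    by (rule basis_exists)
  have ny: "y \<notin> span BX" using y BX X span_minimal by blast
  have fBY: "finite BY" using independent_span_bound[OF P(2) BY(2)] BY(1) P(1) by blast
  have "insert y BX \<subseteq> span BY" using BX BY y XY by blast
  from independent_span_bound[OF fBY independent_insertI[OF ny BX(2)] this]
  have "finite (insert y BX)" "card (insert y BX) \<le> card BY" by auto
  moreover have "y \<notin> BX" using ny span_base by blast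
  ultimately show False using BX BY d by simp
qed

lemma linear_image_span_subset:
  assumes g: "Vector_Spaces.linear scale scale g" and H: "g ` H \<subseteq> span H"
  shows "g ` span H \<subseteq> span H"
proof -
  interpret P: vector_space_pair scale scale ..
  have "span (g ` H) \<subseteq> span H" using H span_minimal by blast
  thus ?thesis using P.linear_span_image[OF g] by simp
qed

end

lemma mod_iso_trans:
  assumes "mod_iso sc M N" "mod_iso sc N P" shows "mod_iso sc M P"
proof -
  obtain h where h: "bij_betw h (carr M) (carr N)"
    "\<forall>x\<in>carr M. \<forall>y\<in>carr M. h (pls M x y) = pls N (h x) (h y)"
    "\<forall>f\<in>dualC sc. \<forall>x\<in>carr M. h (act M f x) = act N f (h x)"
    using assms(1) unfolding mod_iso_def by blast
  obtain k where k: "bij_betw k (carr N) (carr P)"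
    "\<forall>x\<in>carr N. \<forall>y\<in>carr N. k (pls N x y) = pls P (k x) (k y)"
    "\<forall>f\<in>dualC sc. \<forall>x\<in>carr N. k (act N f x) = act P f (k x)"
    using assms(2) unfolding mod_iso_def by blast
  have hin: "x \<in> carr M \<Longrightarrow> h x \<in> carr N" for x using h(1) bij_betwE by blast
  show ?thesis unfolding mod_iso_def
  proof (intro exI[of _ "k \<circ> h"] conjI ballI)
    show "bij_betw (k \<circ> h) (carr M) (carr P)" using h(1) k(1) by (rule bij_betw_trans)
  next
    fix x y assume "x \<in> carr M" "y \<in> carr M"
    thus "(k \<circ> h) (pls M x y) = pls P ((k \<circ> h) x) ((k \<circ> h) y)" using h(2) k(2) hin by simp
  next
    fix f x assume "f \<in> dualC sc" "x \<in> carr M"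
    thus "(k \<circ> h) (act M f x) = act P f ((k \<circ> h) x)" using h(3) k(3) hin by simp
  qed
qed

lemma mod_iso_sym:
  assumes "mod_iso sc M N"
    and cp: "\<forall>x\<in>carr M. \<forall>y\<in>carr M. pls M x y \<in> carr M"
    and ca: "\<forall>f\<in>dualC sc. \<forall>x\<in>carr M. act M f x \<in> carr M"
  shows "mod_iso sc N M"
proof -
  obtain h where h: "bij_betw h (carr M) (carr N)"
    "\<forall>x\<in>carr M. \<forall>y\<in>carr M. h (pls M x y) = pls N (h x) (h y)"
    "\<forall>f\<in>dualC sc. \<forall>x\<in>carr M. h (act M f x) = act N f (h x)"
    using assms(1) unfolding mod_iso_def by blast
  define g where "g = the_inv_into (carr M) h"
  have inj: "inj_on h (carr M)" using h(1) bij_betw_def by blast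
  have g1: "u \<in> carr N \<Longrightarrow> g u \<in> carr M" for u
    using h(1) g_def bij_betw_the_inv_into bij_betwE by blast
  have g2: "u \<in> carr N \<Longrightarrow> h (g u) = u" for u
    using h(1) g_def f_the_inv_into_f_bij_betw by metis
  have g3: "x \<in> carr M \<Longrightarrow> g (h x) = x" for x
    using inj g_def the_inv_into_f_f by metis
  show ?thesis unfolding mod_iso_def
  proof (intro exI[of _ g] conjI ballI)
    show "bij_betw g (carr N) (carr M)" using h(1) g_def bij_betw_the_inv_into by blast
  next
    fix u v assume uv: "u \<in> carr N" "v \<in> carr N"
    have "h (pls M (g u) (g v)) = pls N u v" using h(2) g1 g2 uv by simp
    hence "g (pls N u v) = g (h (pls M (g u) (g v)))" by simp
    also have "\<dots> = pls M (g u) (g v)" using g3 cp g1 uv by blast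
    finally show "g (pls N u v) = pls M (g u) (g v)" .
  next
    fix f u assume fu: "f \<in> dualC sc" "u \<in> carr N"
    have "h (act M f (g u)) = act N f u" using h(3) g1 g2 fu by simp
    hence "g (act N f u) = g (h (act M f (g u)))" by simp
    also have "\<dots> = act M f (g u)" using g3 ca g1 fu by blast
    finally show "g (act N f u) = act M f (g u)" .
  qed
qed

locale coalg =
  fixes sc :: "'k::field \<Rightarrow> 'c::ab_group_add \<Rightarrow> 'c"
    and delta :: "'c \<Rightarrow> ('c \<times> 'c) list"
    and eps :: "'c \<Rightarrow> 'k"
  assumes coalgebra: "coalgebra sc delta eps"
begin

sublocale VS: vector_space sc
  using coalgebra unfolding coalgebra_def by auto

lemma lfun_iff: "lfun sc f \<longleftrightarrow> (\<forall>x y. f (x + y) = f x + f y) \<and> (\<forall>a x. f (sc a x) = a * f x)"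
  unfolding lfun_def linear_iff using VS.vector_space_axioms field_vector_space by auto

lemma lfunD: assumes "lfun sc f" shows "f (x + y) = f x + f y" "f (sc a x) = a * f x"
  using assms by (auto simp: lfun_iff)

lemma lfunI: "(\<And>x y. f (x + y) = f x + f y) \<Longrightarrow> (\<And>a x. f (sc a x) = a * f x) \<Longrightarrow> lfun sc f"
  by (auto simp: lfun_iff)

lemma lfun_zero: "lfun sc f \<Longrightarrow> f 0 = 0"
  by (metis add_cancel_left_right lfunD(1))

lemma lfun_diff: "lfun sc f \<Longrightarrow> f (x - y) = f x - f y"
  by (metis add_diff_cancel diff_add_cancel lfunD(1))

lemma lfun_sum_list: "lfun sc f \<Longrightarrow> f (\<Sum>x\<leftarrow>L. g x) = (\<Sum>x\<leftarrow>L. f (g x))"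
  by (induct L) (auto simp: lfunD lfun_zero)

lemma lfun_eps: "lfun sc eps"
  using coalgebra unfolding coalgebra_def by auto

lemma lfun_add: "lfun sc f \<Longrightarrow> lfun sc g \<Longrightarrow> lfun sc (\<lambda>c. f c + g c)"
  and lfun_diff_fun: "lfun sc f \<Longrightarrow> lfun sc g \<Longrightarrow> lfun sc (\<lambda>c. f c - g c)"
  and lfun_scale: "lfun sc f \<Longrightarrow> lfun sc (\<lambda>c. a * f c)"
  and lfun_const_0: "lfun sc (\<lambda>c. 0)"
  by (auto simp: lfun_iff algebra_simps)

lemma dualCI: "lfun sc f \<Longrightarrow> f \<in> dualC sc"
  and dualCD: "f \<in> dualC sc \<Longrightarrow> lfun sc f"
  by (simp_all add: dualC_def)

lemma zero_dualC: "(\<lambda>c. 0) \<in> dualC sc"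
  and eps_dualC: "eps \<in> dualC sc"
  and eps_scale_dualC: "(\<lambda>c. a * eps c) \<in> dualC sc"
  and neg_eps_dualC: "(\<lambda>c. - eps c) \<in> dualC sc"
  using lfun_scale[OF lfun_eps, of "-1"]
  by (simp_all add: dualCI lfun_const_0 lfun_eps lfun_scale)

lemma add_dualC: "f \<in> dualC sc \<Longrightarrow> g \<in> dualC sc \<Longrightarrow> (\<lambda>c. f c + g c) \<in> dualC sc"
  and diff_dualC: "f \<in> dualC sc \<Longrightarrow> g \<in> dualC sc \<Longrightarrow> (\<lambda>c. f c - g c) \<in> dualC sc"
  by (simp_all add: dualCI dualCD lfun_add lfun_diff_fun)

text \<open>Equalities in C are proved by testing them against all linear functionals: this is the only
  form in which the tensor identities of the coalgebra and comodule axioms are available.\<close>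

lemma functionals_separate: assumes "\<And>h. lfun sc h \<Longrightarrow> h x = h y" shows "x = y"
proof (rule ccontr)
  assume "x \<noteq> y"
  interpret P: vector_space_pair sc "(*) :: 'k \<Rightarrow> 'k \<Rightarrow> 'k"
    using VS.vector_space_axioms field_vector_space by (simp add: vector_space_pair_def)
  have "VS.independent {x - y}" using \<open>x \<noteq> y\<close> by simp
  from P.linear_independent_extend[OF this, of "\<lambda>_. 1"]
  obtain g where g: "Vector_Spaces.linear sc (*) g" "g (x - y) = 1" by blast
  hence "lfun sc g" unfolding lfun_def by simp
  with g(2) assms[of g] show False by (simp add: lfun_diff)
qed

lemma teq2D: "teq2 sc xs ys \<Longrightarrow> lfun sc f \<Longrightarrow> lfun sc g \<Longrightarrow>
  (\<Sum>(u,v)\<leftarrow>xs. f u * g v) = (\<Sum>(u,v)\<leftarrow>ys. f u * g v)"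
  unfolding teq2_def by blast

lemma delta_add: "teq2 sc (delta (x + y)) (delta x @ delta y)"
  and delta_scale: "teq2 sc (delta (sc a x)) (map (\<lambda>(u,v). (sc a u, v)) (delta x))"
  and coassoc: "lfun sc f \<Longrightarrow> lfun sc g \<Longrightarrow> lfun sc h \<Longrightarrow>
        (\<Sum>(u,v)\<leftarrow>delta x. (\<Sum>(p,q)\<leftarrow>delta u. f p * g q) * h v) =
        (\<Sum>(u,v)\<leftarrow>delta x. f u * (\<Sum>(p,q)\<leftarrow>delta v. g p * h q))"
  and counit_left: "(\<Sum>(u,v)\<leftarrow>delta x. sc (eps u) v) = x"
  and counit_right: "(\<Sum>(u,v)\<leftarrow>delta x. sc (eps v) u) = x"
  using coalgebra unfolding coalgebra_def by blast+

lemma conv_lfun: assumes f: "lfun sc f" and g: "lfun sc g" shows "lfun sc (conv delta f g)"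
proof (rule lfunI)
  fix x y show "conv delta f g (x + y) = conv delta f g x + conv delta f g y"
    using teq2D[OF delta_add f g] by (simp add: conv_def)
next
  fix a x
  have "conv delta f g (sc a x) = (\<Sum>(u,v)\<leftarrow>map (\<lambda>(u,v). (sc a u, v)) (delta x). f u * g v)"
    using teq2D[OF delta_scale f g] by (simp add: conv_def)
  also have "\<dots> = (\<Sum>(u,v)\<leftarrow>delta x. a * (f u * g v))"
    by (simp add: o_def case_prod_unfold lfunD[OF f] mult.assoc)
  also have "\<dots> = a * conv delta f g x"
    unfolding conv_def by (simp add: case_prod_unfold sum_list_const_mult)
  finally show "conv delta f g (sc a x) = a * conv delta f g x" .
qed

lemma conv_dualC: "f \<in> dualC sc \<Longrightarrow> g \<in> dualC sc \<Longrightarrow> conv delta f g \<in> dualC sc"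
  by (simp add: dualC_def conv_lfun)

lemma conv_assoc: "lfun sc f \<Longrightarrow> lfun sc g \<Longrightarrow> lfun sc h \<Longrightarrow>
  conv delta (conv delta f g) h = conv delta f (conv delta g h)"
  unfolding conv_def by (rule ext) (simp add: coassoc[unfolded case_prod_unfold] case_prod_unfold)

lemma conv_eps_left: assumes f: "lfun sc f" shows "conv delta eps f = f"
proof
  fix x
  have "f x = f (\<Sum>(u,v)\<leftarrow>delta x. sc (eps u) v)" by (simp add: counit_left)
  thus "conv delta eps f x = f x"
    by (simp add: conv_def lfun_sum_list[OF f] case_prod_unfold lfunD[OF f])
qed

lemma conv_eps_right: assumes f: "lfun sc f" shows "conv delta f eps = f"
proof
  fix x
  have "f x = f (\<Sum>(u,v)\<leftarrow>delta x. sc (eps v) u)" by (simp add: counit_right)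
  thus "conv delta f eps x = f x"
    by (simp add: conv_def lfun_sum_list[OF f] case_prod_unfold lfunD[OF f] mult.commute)
qed

lemma conv_add_left: "conv delta (\<lambda>c. f c + g c) h = (\<lambda>x. conv delta f h x + conv delta g h x)"
  and conv_add_right: "conv delta h (\<lambda>c. f c + g c) = (\<lambda>x. conv delta h f x + conv delta h g x)"
  and conv_diff_left: "conv delta (\<lambda>c. f c - g c) h = (\<lambda>x. conv delta f h x - conv delta g h x)"
  and conv_diff_right: "conv delta h (\<lambda>c. f c - g c) = (\<lambda>x. conv delta h f x - conv delta h g x)"
  and conv_scale_left: "conv delta (\<lambda>c. a * f c) h = (\<lambda>x. a * conv delta f h x)"
  and conv_scale_right: "conv delta h (\<lambda>c. a * f c) = (\<lambda>x. a * conv delta h f x)"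
  and conv_zero_left: "conv delta (\<lambda>c. 0) h = (\<lambda>x. 0)"
  and conv_zero_right: "conv delta h (\<lambda>c. 0) = (\<lambda>x. 0)"
  unfolding conv_def
  by (simp_all add: fun_eq_iff case_prod_unfold algebra_simps sum_list_addf sum_list_subtractf
      flip: sum_list_const_mult)

lemma conv_eps_scale_left: "lfun sc f \<Longrightarrow> conv delta (\<lambda>c. a * eps c) f = (\<lambda>c. a * f c)"
  and conv_eps_scale_right: "lfun sc f \<Longrightarrow> conv delta f (\<lambda>c. a * eps c) = (\<lambda>c. a * f c)"
  by (simp_all add: conv_scale_left conv_scale_right conv_eps_left conv_eps_right)

definition rhit :: "'c \<Rightarrow> ('c \<Rightarrow> 'k) \<Rightarrow> 'c" where
  "rhit c f = (\<Sum>(u,v)\<leftarrow>delta c. sc (f u) v)"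

definition lhit :: "('c \<Rightarrow> 'k) \<Rightarrow> 'c \<Rightarrow> 'c" where
  "lhit f c = (\<Sum>(u,v)\<leftarrow>delta c. sc (f v) u)"

lemma lfun_rhit: "lfun sc h \<Longrightarrow> h (rhit c f) = conv delta f h c"
  unfolding rhit_def conv_def by (simp add: lfun_sum_list case_prod_unfold lfunD)

lemma lfun_lhit: "lfun sc h \<Longrightarrow> h (lhit f c) = conv delta h f c"
  unfolding lhit_def conv_def by (simp add: lfun_sum_list case_prod_unfold lfunD mult.commute)

lemma rhit_add: "lfun sc f \<Longrightarrow> rhit (x + y) f = rhit x f + rhit y f"
  and rhit_scale: "lfun sc f \<Longrightarrow> rhit (sc a x) f = sc a (rhit x f)"
  and lhit_add: "lfun sc f \<Longrightarrow> lhit f (x + y) = lhit f x + lhit f y"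
  and lhit_scale: "lfun sc f \<Longrightarrow> lhit f (sc a x) = sc a (lhit f x)"
  by (rule functionals_separate; simp add: lfun_rhit lfun_lhit lfunD conv_lfun)+

lemma rhit_linear: "lfun sc f \<Longrightarrow> Vector_Spaces.linear sc sc (\<lambda>c. rhit c f)"
  and lhit_linear: "lfun sc f \<Longrightarrow> Vector_Spaces.linear sc sc (lhit f)"
  using VS.vector_space_axioms by (simp_all add: linear_iff rhit_add rhit_scale lhit_add lhit_scale)

lemma rhit_zero: "lfun sc f \<Longrightarrow> rhit 0 f = 0"
  by (metis add_cancel_right_right rhit_add)

lemma rhit_diff: "lfun sc f \<Longrightarrow> rhit (x - y) f = rhit x f - rhit y f"
  by (metis add_diff_cancel diff_add_cancel rhit_add)

lemma rhit_eps: "rhit c eps = c"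
  unfolding rhit_def by (rule counit_left)

lemma rhit_rhit: "lfun sc f \<Longrightarrow> lfun sc g \<Longrightarrow> rhit (rhit c f) g = rhit c (conv delta f g)"
  by (rule functionals_separate) (simp add: lfun_rhit conv_lfun conv_assoc)

lemma rhit_eps_scale: "rhit c (\<lambda>x. a * eps x) = sc a c"
  by (rule functionals_separate) (simp add: lfun_rhit conv_eps_scale_left lfunD)

lemma rhit_add_fun: "rhit c (\<lambda>x. f x + g x) = rhit c f + rhit c g"
  and rhit_zero_fun: "rhit c (\<lambda>x. 0) = 0"
  unfolding rhit_def by (simp_all add: case_prod_unfold VS.scale_left_distrib sum_list_addf)

lemma sum_list_scale_in_span: "(\<Sum>(u,v)\<leftarrow>L. sc (f u) v) \<in> VS.span (snd ` set L)"
proof (induct L)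
  case (Cons p L)
  have "snd p \<in> VS.span (snd ` set (p # L))" by (intro VS.span_base) auto
  moreover have "VS.span (snd ` set L) \<subseteq> VS.span (snd ` set (p # L))" by (intro VS.span_mono) auto
  ultimately show ?case using Cons by (auto simp: case_prod_unfold intro!: VS.span_add VS.span_scale)
qed (simp add: VS.span_zero)

lemma rhit_in_span: "rhit c f \<in> VS.span (snd ` set (delta c))"
  unfolding rhit_def by (rule sum_list_scale_in_span)

end

locale right_mod = coalg sc delta eps
  for sc :: "'k::field \<Rightarrow> 'c::ab_group_add \<Rightarrow> 'c" and delta eps +
  fixes M :: "('c \<Rightarrow> 'k, 'm) amod"
  assumes right_amod: "right_amod sc delta eps M"
begin

abbreviation "Cr \<equiv> carr M"
abbreviation "pl \<equiv> pls M"
abbreviation "z \<equiv> zer M"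

lemma is_amod: "is_amod sc (\<lambda>f g. conv delta g f) eps M"
  using right_amod by (simp add: right_amod_def)

lemma z_in: "z \<in> Cr"
  and pl_assoc: "x \<in> Cr \<Longrightarrow> y \<in> Cr \<Longrightarrow> w \<in> Cr \<Longrightarrow> pl (pl x y) w = pl x (pl y w)"
  and pl_comm: "x \<in> Cr \<Longrightarrow> y \<in> Cr \<Longrightarrow> pl x y = pl y x"
  and pl_zero_left: "x \<in> Cr \<Longrightarrow> pl z x = x"
  and pl_inverse: "x \<in> Cr \<Longrightarrow> \<exists>y\<in>Cr. pl x y = z"
  and act_closed: "f \<in> dualC sc \<Longrightarrow> x \<in> Cr \<Longrightarrow> act M f x \<in> Cr"
  and act_pl: "f \<in> dualC sc \<Longrightarrow> x \<in> Cr \<Longrightarrow> y \<in> Cr \<Longrightarrow> act M f (pl x y) = pl (act M f x) (act M f y)"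
  and act_add_fun: "f \<in> dualC sc \<Longrightarrow> g \<in> dualC sc \<Longrightarrow> x \<in> Cr \<Longrightarrow>
      act M (\<lambda>c. f c + g c) x = pl (act M f x) (act M g x)"
  and act_conv: "f \<in> dualC sc \<Longrightarrow> g \<in> dualC sc \<Longrightarrow> x \<in> Cr \<Longrightarrow>
      act M (conv delta g f) x = act M f (act M g x)"
  and act_eps: "x \<in> Cr \<Longrightarrow> act M eps x = x"
  using is_amod unfolding is_amod_def by blast+

lemma pl_closed: "x \<in> Cr \<Longrightarrow> y \<in> Cr \<Longrightarrow> pl x y \<in> Cr"
  using is_amod unfolding is_amod_def by auto

lemma pl_zero_right: "x \<in> Cr \<Longrightarrow> pl x z = x"
  using pl_zero_left pl_comm z_in by metis

lemma pl_cancel_right: assumes "a \<in> Cr" "b \<in> Cr" "c \<in> Cr" "pl a b = pl c b" shows "a = c"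
proof -
  obtain nb where nb: "nb \<in> Cr" "pl b nb = z" using pl_inverse assms by blast
  have "a = pl a (pl b nb)" using nb assms pl_zero_right by simp
  also have "\<dots> = pl (pl c b) nb" using pl_assoc assms nb by metis
  also have "\<dots> = c" using pl_assoc assms nb pl_zero_right by metis
  finally show ?thesis .
qed

lemma pl_idem_zero: "a \<in> Cr \<Longrightarrow> pl a a = a \<Longrightarrow> a = z"
  using pl_cancel_right[of a a z] pl_zero_left z_in by metis

lemma act_zero_fun: "x \<in> Cr \<Longrightarrow> act M (\<lambda>c. 0) x = z"
  using act_add_fun[OF zero_dualC zero_dualC, of x]
    by (intro pl_idem_zero) (simp_all add: act_closed zero_dualC)

lemma act_zero: "f \<in> dualC sc \<Longrightarrow> act M f z = z"
  using act_pl[of f z z] z_in pl_zero_left by (intro pl_idem_zero) (simp_all add: act_closed)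

lemma msc_closed: "x \<in> Cr \<Longrightarrow> msc eps M a x \<in> Cr"
  unfolding msc_def by (simp add: act_closed eps_scale_dualC)

lemma msc_zero: "msc eps M a z = z"
  unfolding msc_def by (simp add: act_zero eps_scale_dualC)

lemma msc_one: "x \<in> Cr \<Longrightarrow> msc eps M 1 x = x"
  unfolding msc_def by (simp add: act_eps)

lemma msc_msc: assumes x: "x \<in> Cr" shows "msc eps M a (msc eps M b x) = msc eps M (a * b) x"
proof -
  have "conv delta (\<lambda>c. b * eps c) (\<lambda>c. a * eps c) = (\<lambda>c. (a * b) * eps c)"
    by (simp add: conv_eps_scale_right lfun_eps lfun_scale mult.assoc)
  thus ?thesis
    unfolding msc_def using act_conv[OF eps_scale_dualC eps_scale_dualC x, of b a] by simp
qed

lemma act_msc: assumes f: "f \<in> dualC sc" and x: "x \<in> Cr"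
  shows "act M f (msc eps M a x) = msc eps M a (act M f x)"
proof -
  have "act M f (msc eps M a x) = act M (conv delta (\<lambda>c. a * eps c) f) x"
    unfolding msc_def using act_conv[OF f eps_scale_dualC x] by simp
  also have "\<dots> = act M (conv delta f (\<lambda>c. a * eps c)) x"
    using f dualCD by (simp add: conv_eps_scale_right conv_eps_scale_left)
  also have "\<dots> = msc eps M a (act M f x)"
    unfolding msc_def using act_conv[OF eps_scale_dualC f x] by simp
  finally show ?thesis .
qed

lemma mlin_zero: "mlin eps M \<psi> \<Longrightarrow> \<psi> z = 0"
  unfolding mlin_def using z_in pl_zero_left by (metis add_cancel_left_right)

lemma msum_map_closed:
  "(\<And>c u. (c,u) \<in> set L \<Longrightarrow> u \<in> Cr) \<Longrightarrow> msum M (map (\<lambda>(c,u). msc eps M (g c) u) L) \<in> Cr"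
  unfolding msum_def by (induct L) (auto intro!: z_in pl_closed msc_closed)

lemma mlin_msum: assumes "mlin eps M \<psi>" "\<And>c u. (c,u) \<in> set L \<Longrightarrow> u \<in> Cr"
  shows "\<psi> (msum M (map (\<lambda>(c,u). msc eps M (g c) u) L)) = (\<Sum>(c,u)\<leftarrow>L. g c * \<psi> u)"
  using assms(2)
proof (induct L)
  case Nil thus ?case using mlin_zero[OF assms(1)] by (simp add: msum_def)
next
  case (Cons p L)
  obtain c u where p: "p = (c,u)" by fastforce
  have u: "u \<in> Cr" using Cons p by auto
  have IH: "\<psi> (msum M (map (\<lambda>(c,u). msc eps M (g c) u) L)) = (\<Sum>(c,u)\<leftarrow>L. g c * \<psi> u)"
    using Cons by auto
  have "msum M (map (\<lambda>(c,u). msc eps M (g c) u) L) \<in> Cr"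
    using Cons by (intro msum_map_closed) auto
  with assms(1) u IH show ?case
    unfolding mlin_def by (simp add: msum_def p msc_closed)
qed

lemma mlin_act: assumes "mlin eps M \<psi>" "g \<in> dualC sc" shows "mlin eps M (\<lambda>x. \<psi> (act M g x))"
  unfolding mlin_def
proof (intro conjI ballI allI)
  fix x y assume "x \<in> Cr" "y \<in> Cr"
  thus "\<psi> (act M g (pl x y)) = \<psi> (act M g x) + \<psi> (act M g y)"
    using assms act_pl[OF assms(2)] act_closed[OF assms(2)] unfolding mlin_def by metis
next
  fix a x assume "x \<in> Cr"
  thus "\<psi> (act M g (msc eps M a x)) = a * \<psi> (act M g x)"
    using assms act_msc[OF assms(2)] act_closed[OF assms(2)] unfolding mlin_def by metis
qed

end

locale rational_right_mod = right_mod sc delta eps M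
  for sc :: "'k::field \<Rightarrow> 'c::ab_group_add \<Rightarrow> 'c" and delta eps and M :: "('c \<Rightarrow> 'k, 'm) amod" +
  fixes lam :: "'m \<Rightarrow> ('c \<times> 'm) list"
  assumes left_comod: "left_comod sc delta eps M lam"
    and act_lam: "\<And>f x. f \<in> dualC sc \<Longrightarrow> x \<in> carr M \<Longrightarrow>
      act M f x = msum M (map (\<lambda>(c,u). msc eps M (f c) u) (lam x))"
begin

lemma lam_carr: "y \<in> Cr \<Longrightarrow> (c,u) \<in> set (lam y) \<Longrightarrow> u \<in> Cr"
  using left_comod unfolding left_comod_def by fastforce

lemma lam_add: "x \<in> Cr \<Longrightarrow> y \<in> Cr \<Longrightarrow> mlin eps M \<phi> \<Longrightarrow> lfun sc f \<Longrightarrow>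
        (\<Sum>(c,u)\<leftarrow>lam (pl x y). f c * \<phi> u) = (\<Sum>(c,u)\<leftarrow>lam x @ lam y. f c * \<phi> u)"
  and lam_scale: "x \<in> Cr \<Longrightarrow> mlin eps M \<phi> \<Longrightarrow> lfun sc f \<Longrightarrow>
        (\<Sum>(c,u)\<leftarrow>lam (msc eps M a x). f c * \<phi> u) = (\<Sum>(c,u)\<leftarrow>lam x. f (sc a c) * \<phi> u)"
  and lam_coassoc: "x \<in> Cr \<Longrightarrow> mlin eps M \<phi> \<Longrightarrow> lfun sc f \<Longrightarrow> lfun sc g \<Longrightarrow>
        (\<Sum>(c,u)\<leftarrow>lam x. (\<Sum>(p,q)\<leftarrow>delta c. f p * g q) * \<phi> u) =
        (\<Sum>(c,u)\<leftarrow>lam x. f c * (\<Sum>(d,p)\<leftarrow>lam u. g d * \<phi> p))"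
  and lam_counit: "x \<in> Cr \<Longrightarrow> msum M (map (\<lambda>(c,u). msc eps M (eps c) u) (lam x)) = x"
  using left_comod unfolding left_comod_def by blast+

definition lam_pair :: "('c \<Rightarrow> 'k) \<Rightarrow> ('m \<Rightarrow> 'k) \<Rightarrow> 'm \<Rightarrow> 'k" where
  "lam_pair h \<phi> y = (\<Sum>(c,u)\<leftarrow>lam y. h c * \<phi> u)"

lemma lam_pair_mlin: assumes "mlin eps M \<phi>" "lfun sc h" shows "mlin eps M (lam_pair h \<phi>)"
  unfolding mlin_def lam_pair_def
proof (intro conjI ballI allI)
  fix x y assume "x \<in> Cr" "y \<in> Cr"
  thus "(\<Sum>(c,u)\<leftarrow>lam (pl x y). h c * \<phi> u) = (\<Sum>(c,u)\<leftarrow>lam x. h c * \<phi> u) + (\<Sum>(c,u)\<leftarrow>lam y. h c * \<phi> u)"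
    using lam_add[OF _ _ assms(1,2)] by simp
next
  fix a x assume "x \<in> Cr"
  show "(\<Sum>(c,u)\<leftarrow>lam (msc eps M a x). h c * \<phi> u) = a * (\<Sum>(c,u)\<leftarrow>lam x. h c * \<phi> u)"
  proof -
    have "(\<Sum>(c,u)\<leftarrow>lam (msc eps M a x). h c * \<phi> u) = (\<Sum>(c,u)\<leftarrow>lam x. h (sc a c) * \<phi> u)"
      using lam_scale[OF \<open>x \<in> Cr\<close> assms(1,2)] by simp
    also have "\<dots> = (\<Sum>(c,u)\<leftarrow>lam x. a * (h c * \<phi> u))"
      by (rule arg_cong[where f=sum_list], rule map_cong, simp) (auto simp: lfunD(2)[OF assms(2)])
    also have "\<dots> = a * (\<Sum>(c,u)\<leftarrow>lam x. h c * \<phi> u)"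
      by (simp add: case_prod_unfold sum_list_const_mult)
    finally show ?thesis .
  qed
qed

definition coef :: "('m \<Rightarrow> 'k) \<Rightarrow> 'm \<Rightarrow> 'c" where
  "coef \<phi> y = (\<Sum>(c,u)\<leftarrow>lam y. sc (\<phi> u) c)"

lemma lfun_coef: "lfun sc h \<Longrightarrow> h (coef \<phi> y) = lam_pair h \<phi> y"
  unfolding coef_def lam_pair_def by (simp add: lfun_sum_list case_prod_unfold lfunD mult.commute)

lemma coef_pl: assumes "mlin eps M \<phi>" "x \<in> Cr" "y \<in> Cr" shows "coef \<phi> (pl x y) = coef \<phi> x + coef \<phi> y"
proof (rule functionals_separate)
  fix h assume h: "lfun sc h"
  have "lam_pair h \<phi> (pl x y) = lam_pair h \<phi> x + lam_pair h \<phi> y"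
    using lam_pair_mlin[OF assms(1) h] assms(2,3) unfolding mlin_def by blast
  thus "h (coef \<phi> (pl x y)) = h (coef \<phi> x + coef \<phi> y)"
    using lfun_coef[OF h, of \<phi>] lfunD(1)[OF h, of "coef \<phi> x" "coef \<phi> y"] by simp
qed

lemma coef_msc: assumes "mlin eps M \<phi>" "x \<in> Cr" shows "coef \<phi> (msc eps M a x) = sc a (coef \<phi> x)"
proof (rule functionals_separate)
  fix h assume h: "lfun sc h"
  have "lam_pair h \<phi> (msc eps M a x) = a * lam_pair h \<phi> x"
    using lam_pair_mlin[OF assms(1) h] assms(2) unfolding mlin_def by blast
  thus "h (coef \<phi> (msc eps M a x)) = h (sc a (coef \<phi> x))"
    using lfun_coef[OF h, of \<phi>] lfunD(2)[OF h, of a "coef \<phi> x"] by simp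
qed

lemma coef_zero: assumes "mlin eps M \<phi>" shows "coef \<phi> z = 0"
proof (rule functionals_separate)
  fix h assume h: "lfun sc h"
  show "h (coef \<phi> z) = h 0"
    using lfun_coef[OF h, of \<phi> z] mlin_zero[OF lam_pair_mlin[OF assms h]] lfun_zero[OF h] by simp
qed

lemma lam_pair_act: assumes "mlin eps M \<phi>" "lfun sc h" "g \<in> dualC sc" "y \<in> Cr"
  shows "lam_pair h \<phi> (act M g y) = (\<Sum>(c,u)\<leftarrow>lam y. g c * lam_pair h \<phi> u)"
  using mlin_msum[OF lam_pair_mlin[OF assms(1,2)], of "lam y" g] act_lam[OF assms(3,4)]
    lam_carr[OF assms(4)]
  by simp

lemma coef_act: assumes ph: "mlin eps M \<phi>" and g: "g \<in> dualC sc" and y: "y \<in> Cr"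
  shows "coef \<phi> (act M g y) = rhit (coef \<phi> y) g"
proof (rule functionals_separate)
  fix h assume h: "lfun sc h"
  have gl: "lfun sc g" using g by (simp add: dualCD)
  have "h (coef \<phi> (act M g y)) = (\<Sum>(c,u)\<leftarrow>lam y. g c * lam_pair h \<phi> u)"
    using lfun_coef[OF h] lam_pair_act[OF ph h g y] by simp
  also have "\<dots> = (\<Sum>(c,u)\<leftarrow>lam y. g c * (\<Sum>(d,p)\<leftarrow>lam u. h d * \<phi> p))"
    unfolding lam_pair_def by simp
  also have "\<dots> = (\<Sum>(c,u)\<leftarrow>lam y. (\<Sum>(p,q)\<leftarrow>delta c. g p * h q) * \<phi> u)"
    using lam_coassoc[OF y ph gl h] by simp
  also have "\<dots> = (\<Sum>(c,u)\<leftarrow>lam y. conv delta g h c * \<phi> u)"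
    by (simp add: conv_def)
  also have "\<dots> = conv delta g h (coef \<phi> y)"
    using lfun_coef[OF conv_lfun[OF gl h]] by (simp add: lam_pair_def)
  also have "\<dots> = h (rhit (coef \<phi> y) g)"
    by (simp add: lfun_rhit[OF h])
  finally show "h (coef \<phi> (act M g y)) = h (rhit (coef \<phi> y) g)" .
qed

lemma eps_coef: assumes ph: "mlin eps M \<phi>" and y: "y \<in> Cr" shows "eps (coef \<phi> y) = \<phi> y"
proof -
  have "eps (coef \<phi> y) = (\<Sum>(c,u)\<leftarrow>lam y. eps c * \<phi> u)"
    by (simp add: lfun_coef lfun_eps lam_pair_def)
  also have "\<dots> = \<phi> (msum M (map (\<lambda>(c,u). msc eps M (eps c) u) (lam y)))"
    using mlin_msum[OF ph, of "lam y" eps] lam_carr[OF y] by simp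
  also have "\<dots> = \<phi> y" using lam_counit[OF y] by simp
  finally show ?thesis .
qed

lemma lhit_coef: assumes ph: "mlin eps M \<phi>" and g: "g \<in> dualC sc" and y: "y \<in> Cr"
  shows "lhit g (coef \<phi> y) = coef (\<lambda>x. \<phi> (act M g x)) y"
proof (rule functionals_separate)
  fix h assume h: "lfun sc h"
  have gl: "lfun sc g" using g by (simp add: dualCD)
  have "h (lhit g (coef \<phi> y)) = (\<Sum>(c,u)\<leftarrow>lam y. conv delta h g c * \<phi> u)"
    by (simp add: lfun_lhit[OF h] lfun_coef conv_lfun[OF h gl] lam_pair_def)
  also have "\<dots> = (\<Sum>(c,u)\<leftarrow>lam y. h c * (\<Sum>(d,p)\<leftarrow>lam u. g d * \<phi> p))"
    using lam_coassoc[OF y ph h gl] by (simp add: conv_def)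
  also have "\<dots> = (\<Sum>(c,u)\<leftarrow>lam y. h c * \<phi> (act M g u))"
  proof -
    have "\<phi> (act M g u) = (\<Sum>(d,p)\<leftarrow>lam u. g d * \<phi> p)" if cu: "(c,u) \<in> set (lam y)" for c u
    proof -
      have u: "u \<in> Cr" using lam_carr[OF y cu] .
      show ?thesis using mlin_msum[OF ph, of "lam u" g] act_lam[OF g u] lam_carr[OF u] by simp
    qed
    thus ?thesis by (intro arg_cong[where f=sum_list] map_cong) auto
  qed
  also have "\<dots> = h (coef (\<lambda>x. \<phi> (act M g x)) y)"
    by (simp add: lfun_coef[OF h] lam_pair_def)
  finally show "h (lhit g (coef \<phi> y)) = h (coef (\<lambda>x. \<phi> (act M g x)) y)" .
qed

end

definition fun_scale :: "'k::field \<Rightarrow> ('c \<Rightarrow> 'k) \<Rightarrow> ('c \<Rightarrow> 'k)" where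
  "fun_scale a f = (\<lambda>c. a * f c)"

interpretation FS: vector_space "fun_scale :: 'k::field \<Rightarrow> ('c \<Rightarrow> 'k) \<Rightarrow> ('c \<Rightarrow> 'k)"
  by unfold_locales (auto simp: fun_scale_def fun_eq_iff algebra_simps plus_fun_def)

context right_mod begin

definition ann :: "'m \<Rightarrow> ('c \<Rightarrow> 'k) set" where
  "ann x = {g \<in> dualC sc. act M g x = z}"

lemma fun_scale_conv: "f \<in> dualC sc \<Longrightarrow> fun_scale a f = conv delta f (\<lambda>c. a * eps c)"
  by (simp add: fun_scale_def conv_eps_scale_right dualCD)

lemma act_fun_scale: assumes "f \<in> dualC sc" "x \<in> Cr"
  shows "act M (fun_scale a f) x = msc eps M a (act M f x)"
  using act_conv[OF eps_scale_dualC assms] by (simp add: fun_scale_conv[OF assms(1)] msc_def)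

lemma ann_subspace: assumes x: "x \<in> Cr" shows "FS.subspace (ann x)"
  unfolding FS.subspace_def ann_def
proof (intro conjI ballI allI)
  show "0 \<in> {g \<in> dualC sc. act M g x = z}"
    using zero_dualC act_zero_fun[OF x] by (simp add: zero_fun_def)
next
  fix a b assume "a \<in> {g \<in> dualC sc. act M g x = z}" "b \<in> {g \<in> dualC sc. act M g x = z}"
  thus "a + b \<in> {g \<in> dualC sc. act M g x = z}"
    using act_add_fun[of a b x] x z_in pl_zero_left by (simp add: plus_fun_def add_dualC)
next
  fix c a assume "a \<in> {g \<in> dualC sc. act M g x = z}"
  thus "fun_scale c a \<in> {g \<in> dualC sc. act M g x = z}"
    using act_fun_scale[OF _ x] msc_zero by (simp add: fun_scale_def dualCI dualCD lfun_scale)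
qed

lemma ann_inter_span_eps: assumes x: "x \<in> Cr" "x \<noteq> z" shows "FS.span {eps} \<inter> ann x \<subseteq> {0}"
proof
  fix g assume g: "g \<in> FS.span {eps} \<inter> ann x"
  then obtain k where gk: "g = fun_scale k eps" using FS.span_singleton by blast
  hence mz: "msc eps M k x = z" using g by (simp add: fun_scale_def ann_def msc_def)
  have "k = 0"
  proof (rule ccontr)
    assume "k \<noteq> 0"
    hence "x = msc eps M (inverse k) (msc eps M k x)" using msc_one[OF x(1)] msc_msc[OF x(1)] by simp
    thus False using mz msc_zero x by simp
  qed
  thus "g \<in> {0}" using gk by (simp add: fun_scale_def zero_fun_def)
qed

lemma exists_functional_ann:
  assumes x: "x \<in> Cr" "x \<noteq> z"
  shows "\<exists>\<psi>. Vector_Spaces.linear fun_scale (*) \<psi> \<and> (\<forall>g\<in>ann x. \<psi> g = 0) \<and> \<psi> eps = 1"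
proof -
  have "eps \<noteq> 0"
    using act_eps[OF x(1)] act_zero_fun[OF x(1)] x(2) by (auto simp: zero_fun_def)
  hence "FS.independent {eps}" by simp
  thus ?thesis
    using FS.linear_functional_extension[OF ann_subspace[OF x(1)] _ ann_inter_span_eps[OF x], of "\<lambda>_. 1"]
    by blast
qed

lemma functional_ann_eq:
  assumes \<psi>: "Vector_Spaces.linear fun_scale (*) \<psi>" "\<forall>g\<in>ann x. \<psi> g = 0" and x: "x \<in> Cr"
    and g: "g \<in> dualC sc" "g' \<in> dualC sc" "act M g x = act M g' x"
  shows "\<psi> g = \<psi> g'"
proof -
  define d where "d = (\<lambda>c. g c - g' c)"
  have d: "d \<in> dualC sc" using g by (simp add: d_def diff_dualC)
  have "g = (\<lambda>c. d c + g' c)" by (simp add: d_def)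
  hence "pl (act M d x) (act M g' x) = pl z (act M g' x)"
    using act_add_fun[OF d g(2) x] g(3) pl_zero_left act_closed[OF g(2) x] by simp
  hence "act M d x = z" using pl_cancel_right[OF act_closed[OF d x] act_closed[OF g(2) x] z_in] by blast
  hence "\<psi> d = 0" using d \<psi>(2) by (simp add: ann_def)
  moreover have "g = d + g'" by (simp add: d_def plus_fun_def)
  ultimately show ?thesis using \<psi>(1) by (simp add: linear_iff)
qed

end

locale simple_right_mod = right_mod sc delta eps M
  for sc :: "'k::field \<Rightarrow> 'c::ab_group_add \<Rightarrow> 'c" and delta eps and M :: "('c \<Rightarrow> 'k, 'm) amod" +
  assumes simple: "simple_on sc M"
begin

lemma carr_eq_orbit: assumes x: "x \<in> Cr" "x \<noteq> z" shows "Cr = {act M g x | g. g \<in> dualC sc}"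
proof -
  let ?N = "{act M g x | g. g \<in> dualC sc}"
  have sub: "submod sc M ?N" unfolding submod_def
  proof (intro conjI ballI)
    show "?N \<subseteq> Cr" using act_closed x by blast
    show "z \<in> ?N" using act_zero_fun[OF x(1)] zero_dualC by (intro CollectI exI[of _ "\<lambda>c. 0"]) simp
  next
    fix a b assume "a \<in> ?N" "b \<in> ?N"
    then obtain f g where "f \<in> dualC sc" "g \<in> dualC sc" "a = act M f x" "b = act M g x" by blast
    thus "pls M a b \<in> ?N"
      using act_add_fun[of f g x] x add_dualC[of f g] by (intro CollectI exI[of _ "\<lambda>c. f c + g c"]) simp
  next
    fix f a assume f: "f \<in> dualC sc" and "a \<in> ?N"
    then obtain g where "g \<in> dualC sc" "a = act M g x" by blast
    thus "act M f a \<in> ?N"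
      using act_conv[OF f _ x(1)] conv_dualC[OF _ f] by (intro CollectI exI[of _ "conv delta g f"]) simp
  qed
  have "x \<in> ?N" using act_eps[OF x(1)] eps_dualC by (intro CollectI exI[of _ eps]) simp
  hence "?N \<noteq> {z}" using x by blast
  thus ?thesis using simple sub unfolding simple_on_def by blast
qed

text \<open>Since M = A x, a linear functional on A vanishing on ann x and sending eps to 1
  descends to a linear functional on M with value 1 at x.\<close>

lemma exists_mlin_eq_1: assumes x: "x \<in> Cr" "x \<noteq> z" shows "\<exists>\<phi>. mlin eps M \<phi> \<and> \<phi> x = 1"
proof -
  obtain \<psi> where \<psi>: "Vector_Spaces.linear fun_scale (*) \<psi>" "\<forall>g\<in>ann x. \<psi> g = 0" "\<psi> eps = 1"
    using exists_functional_ann[OF x] by blast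
  have \<psi>_add: "\<psi> (a + b) = \<psi> a + \<psi> b" and \<psi>_scale: "\<psi> (fun_scale c a) = c * \<psi> a" for a b c
    using \<psi>(1) by (simp_all add: linear_iff)
  note \<psi>_eq = functional_ann_eq[OF \<psi>(1,2) x(1)]
  define pre where "pre y = (SOME g. g \<in> dualC sc \<and> act M g x = y)" for y
  have pre: "pre y \<in> dualC sc \<and> act M (pre y) x = y" if "y \<in> Cr" for y
  proof -
    have "\<exists>g. g \<in> dualC sc \<and> act M g x = y" using carr_eq_orbit[OF x] that by auto
    thus ?thesis unfolding pre_def by (rule someI_ex)
  qed
  define \<phi> where "\<phi> y = \<psi> (pre y)" for y
  have "mlin eps M \<phi>" unfolding mlin_def
  proof (intro conjI ballI allI)
    fix y1 y2 assume y: "y1 \<in> Cr" "y2 \<in> Cr"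
    have "act M (pre y1 + pre y2) x = pl y1 y2"
      using act_add_fun[of "pre y1" "pre y2" x] pre y x by (simp add: plus_fun_def)
    thus "\<phi> (pl y1 y2) = \<phi> y1 + \<phi> y2"
      using \<psi>_eq[of "pre (pl y1 y2)" "pre y1 + pre y2"] pre[OF pl_closed[OF y]] pre y \<psi>_add
      by (simp add: \<phi>_def plus_fun_def add_dualC)
  next
    fix a y assume y: "y \<in> Cr"
    have "act M (fun_scale a (pre y)) x = msc eps M a y"
      using act_fun_scale[OF _ x(1)] pre[OF y] by simp
    thus "\<phi> (msc eps M a y) = a * \<phi> y"
      using \<psi>_eq[of "pre (msc eps M a y)" "fun_scale a (pre y)"] pre[OF msc_closed[OF y]] pre[OF y] \<psi>_scale
      by (simp add: \<phi>_def fun_scale_def dualCI dualCD lfun_scale)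
  qed
  moreover have "\<phi> x = 1"
    using \<psi>_eq[OF _ eps_dualC] pre[OF x(1)] act_eps[OF x(1)] \<psi>(3) by (simp add: \<phi>_def)
  ultimately show ?thesis by blast
qed

end

context coalg begin

definition submodC :: "'c set \<Rightarrow> bool" where
  "submodC T \<longleftrightarrow> VS.subspace T \<and> (\<forall>c\<in>T. \<forall>f\<in>dualC sc. rhit c f \<in> T)"

definition hitmod :: "'c set \<Rightarrow> ('c \<Rightarrow> 'k, 'c) amod" where
  "hitmod T = \<lparr>carr = T, zer = 0, pls = (+), act = (\<lambda>f c. rhit c f)\<rparr>"

lemma hitmod_simps [simp]:
  "carr (hitmod T) = T" "zer (hitmod T) = 0" "pls (hitmod T) = (+)" "act (hitmod T) f c = rhit c f"
  by (simp_all add: hitmod_def)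

lemma submodC_0: "submodC X \<Longrightarrow> 0 \<in> X"
  and submodC_add: "submodC X \<Longrightarrow> x \<in> X \<Longrightarrow> y \<in> X \<Longrightarrow> x + y \<in> X"
  and submodC_diff: "submodC X \<Longrightarrow> x \<in> X \<Longrightarrow> y \<in> X \<Longrightarrow> x - y \<in> X"
  and submodC_scale: "submodC X \<Longrightarrow> x \<in> X \<Longrightarrow> sc a x \<in> X"
  and submodC_rhit: "submodC X \<Longrightarrow> x \<in> X \<Longrightarrow> f \<in> dualC sc \<Longrightarrow> rhit x f \<in> X"
  unfolding submodC_def by (auto simp: VS.subspace_0 VS.subspace_add VS.subspace_diff VS.subspace_scale)

lemma submodC_Int: "submodC X \<Longrightarrow> submodC Y \<Longrightarrow> submodC (X \<inter> Y)"
  unfolding submodC_def by (auto simp: VS.subspace_inter)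

lemma submodC_set_plus: assumes X: "submodC X" and Y: "submodC Y" shows "submodC (X + Y)"
  unfolding submodC_def VS.subspace_def
proof (intro conjI ballI allI)
  show "0 \<in> X + Y" using submodC_0[OF X] submodC_0[OF Y] by (metis add_0 set_plus_intro)
next
  fix u v assume "u \<in> X + Y" "v \<in> X + Y"
  then obtain a b a' b' where "u = a + b" "v = a' + b'" "a \<in> X" "a' \<in> X" "b \<in> Y" "b' \<in> Y"
    by (auto elim!: set_plus_elim)
  moreover have "u + v = (a + a') + (b + b')" using calculation by (simp add: algebra_simps)
  ultimately show "u + v \<in> X + Y" using submodC_add[OF X] submodC_add[OF Y] by (metis set_plus_intro)
next
  fix c u assume "u \<in> X + Y"
  then obtain a b where "u = a + b" "a \<in> X" "b \<in> Y" by (auto elim!: set_plus_elim)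
  thus "sc c u \<in> X + Y"
    using submodC_scale[OF X] submodC_scale[OF Y] by (auto simp: VS.scale_right_distrib)
next
  fix u f assume "u \<in> X + Y" and f: "f \<in> dualC sc"
  then obtain a b where "u = a + b" "a \<in> X" "b \<in> Y" by (auto elim!: set_plus_elim)
  thus "rhit u f \<in> X + Y"
    using submodC_rhit[OF X _ f] submodC_rhit[OF Y _ f] f by (auto simp: rhit_add dualCD)
qed

lemma submodC_zero: "submodC {0}"
  by (simp add: submodC_def rhit_zero dualCD)

lemma submodC_sum_list: "(\<And>I. I \<in> set Is \<Longrightarrow> submodC I) \<Longrightarrow> submodC (sum_list Is)"
  by (induct Is) (simp_all add: submodC_zero submodC_set_plus)

lemma submod_hitmod_iff: "submod sc (hitmod T) N \<longleftrightarrow> submodC N \<and> N \<subseteq> T"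
proof
  assume N: "submod sc (hitmod T) N"
  have "sc a x \<in> N" if "x \<in> N" for a x
    using N that eps_scale_dualC[of a] unfolding submod_def by (auto simp flip: rhit_eps_scale)
  with N show "submodC N \<and> N \<subseteq> T"
    unfolding submod_def submodC_def VS.subspace_def by auto
qed (auto simp: submodC_def submod_def VS.subspace_0 VS.subspace_add)

lemma simple_hitmod_iff: "simple_on sc (hitmod T) \<longleftrightarrow> T \<noteq> {0} \<and> (\<forall>N. submodC N \<and> N \<subseteq> T \<longrightarrow> N = {0} \<or> N = T)"
  unfolding simple_on_def by (simp add: submod_hitmod_iff)

lemma simple_hitmod_nonzero: "simple_on sc (hitmod T) \<Longrightarrow> T \<noteq> {0}"
  and simple_hitmodD: "simple_on sc (hitmod T) \<Longrightarrow> submodC N \<Longrightarrow> N \<subseteq> T \<Longrightarrow> N = {0} \<or> N = T"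
  by (simp_all add: simple_hitmod_iff)

lemma submodC_image:
  assumes T: "submodC T"
    and add: "\<And>t1 t2. t1 \<in> T \<Longrightarrow> t2 \<in> T \<Longrightarrow> p (t1 + t2) = p t1 + p t2"
    and hom: "\<And>t f. t \<in> T \<Longrightarrow> f \<in> dualC sc \<Longrightarrow> p (rhit t f) = rhit (p t) f"
  shows "submodC (p ` T)"
  unfolding submodC_def VS.subspace_def
proof (intro conjI ballI allI)
  have "p (rhit 0 (\<lambda>c. 0)) = 0" using hom[OF submodC_0[OF T] zero_dualC] by (simp add: rhit_zero_fun)
  thus "0 \<in> p ` T" using submodC_0[OF T] by (metis image_eqI rhit_zero_fun)
next
  fix x y assume "x \<in> p ` T" "y \<in> p ` T"
  then obtain t1 t2 where "t1 \<in> T" "t2 \<in> T" "x = p t1" "y = p t2" by auto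
  thus "x + y \<in> p ` T" using add submodC_add[OF T] by (metis image_eqI)
next
  fix c x assume "x \<in> p ` T"
  then obtain t where t: "t \<in> T" "x = p t" by auto
  have "sc c x = p (rhit t (\<lambda>y. c * eps y))"
    using hom[OF t(1) eps_scale_dualC] t by (simp add: rhit_eps_scale)
  thus "sc c x \<in> p ` T" using submodC_rhit[OF T t(1) eps_scale_dualC] by blast
next
  fix x f assume "x \<in> p ` T" and f: "f \<in> dualC sc"
  then obtain t where t: "t \<in> T" "x = p t" by auto
  thus "rhit x f \<in> p ` T" using hom[OF t(1) f] submodC_rhit[OF T t(1) f] by (metis image_eqI)
qed

lemma projection_along:
  assumes I: "submodC I" and Y: "submodC Y" and IY: "I \<inter> Y = {0}" and T: "submodC T" "T \<subseteq> I + Y"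
  obtains p where "\<And>t. t \<in> T \<Longrightarrow> p t \<in> I \<and> t - p t \<in> Y"
    "\<And>t1 t2. t1 \<in> T \<Longrightarrow> t2 \<in> T \<Longrightarrow> p (t1 + t2) = p t1 + p t2"
    "\<And>t f. t \<in> T \<Longrightarrow> f \<in> dualC sc \<Longrightarrow> p (rhit t f) = rhit (p t) f"
proof
  define p where "p t = (SOME i. i \<in> I \<and> t - i \<in> Y)" for t
  show p: "p t \<in> I \<and> t - p t \<in> Y" if "t \<in> T" for t
  proof -
    from T(2) that have "t \<in> I + Y" by blast
    then obtain a b where "t = a + b" "a \<in> I" "b \<in> Y" by (rule set_plus_elim)
    hence "\<exists>i. i \<in> I \<and> t - i \<in> Y" by (intro exI[of _ a]) simp
    thus ?thesis unfolding p_def by (rule someI_ex)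
  qed
  have p_eqI: "p t = i" if "t \<in> T" "i \<in> I" "t - i \<in> Y" for t i
  proof -
    have "p t - i \<in> I" using submodC_diff[OF I] p that by blast
    moreover have "(t - i) - (t - p t) \<in> Y" using submodC_diff[OF Y] p that by blast
    ultimately have "p t - i \<in> I \<inter> Y" by simp
    thus ?thesis using IY by simp
  qed
  show "p (t1 + t2) = p t1 + p t2" if t: "t1 \<in> T" "t2 \<in> T" for t1 t2
  proof (rule p_eqI)
    show "t1 + t2 \<in> T" using submodC_add[OF T(1) t] .
    show "p t1 + p t2 \<in> I" using submodC_add[OF I] p[OF t(1)] p[OF t(2)] by blast
    have "(t1 - p t1) + (t2 - p t2) \<in> Y" using submodC_add[OF Y] p[OF t(1)] p[OF t(2)] by blast
    thus "t1 + t2 - (p t1 + p t2) \<in> Y" by (simp add: algebra_simps)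
  qed
  show "p (rhit t f) = rhit (p t) f" if t: "t \<in> T" and f: "f \<in> dualC sc" for t f
  proof (rule p_eqI)
    show "rhit t f \<in> T" using submodC_rhit[OF T(1) t f] .
    show "rhit (p t) f \<in> I" using submodC_rhit[OF I _ f] p[OF t] by blast
    have "rhit (t - p t) f \<in> Y" using submodC_rhit[OF Y _ f] p[OF t] by blast
    thus "rhit t f - rhit (p t) f \<in> Y" using f by (simp add: rhit_diff dualCD)
  qed
qed

text \<open>If T \<inter> Y = 0, the projection of T \<subseteq> I + Y onto the simple summand I is injective
  and A-linear, hence onto.\<close>

lemma hitmod_iso_of_subset_plus:
  assumes T: "submodC T" "simple_on sc (hitmod T)" and I: "submodC I" "simple_on sc (hitmod I)"
    and Y: "submodC Y" and TIY: "T \<subseteq> I + Y" and TY: "T \<inter> Y = {0}"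
  shows "mod_iso sc (hitmod T) (hitmod I)"
proof -
  have IY: "I \<inter> Y = {0}"
  proof -
    have "T \<subseteq> Y" if "I \<subseteq> Y"
      using TIY that submodC_add[OF Y] by (auto elim!: set_plus_elim)
    hence "\<not> I \<subseteq> Y" using TY simple_hitmod_nonzero[OF T(2)] by auto
    thus ?thesis using simple_hitmodD[OF I(2) submodC_Int[OF I(1) Y]] by auto
  qed
  obtain p where p: "\<And>t. t \<in> T \<Longrightarrow> p t \<in> I \<and> t - p t \<in> Y"
    and p_add: "\<And>t1 t2. t1 \<in> T \<Longrightarrow> t2 \<in> T \<Longrightarrow> p (t1 + t2) = p t1 + p t2"
    and p_rhit: "\<And>t f. t \<in> T \<Longrightarrow> f \<in> dualC sc \<Longrightarrow> p (rhit t f) = rhit (p t) f"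
    using projection_along[OF I(1) Y IY T(1) TIY] by blast
  have p_inj: "inj_on p T"
  proof (rule inj_onI)
    fix t1 t2 assume t: "t1 \<in> T" "t2 \<in> T" "p t1 = p t2"
    have "(t1 - p t1) - (t2 - p t2) \<in> Y" using submodC_diff[OF Y] p t by blast
    moreover have "t1 - t2 = (t1 - p t1) - (t2 - p t2)" using t(3) by simp
    ultimately have "t1 - t2 \<in> Y" by (simp only:)
    moreover have "t1 - t2 \<in> T" using submodC_diff[OF T(1) t(1,2)] .
    ultimately have "t1 - t2 \<in> T \<inter> Y" by blast
    thus "t1 = t2" using TY by simp
  qed
  have "p ` T \<noteq> {0}"
  proof
    assume P: "p ` T = {0}"
    obtain t where t: "t \<in> T" "t \<noteq> 0"
      using simple_hitmod_nonzero[OF T(2)] submodC_0[OF T(1)] by blast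
    have "p t = p 0" using P t(1) submodC_0[OF T(1)] by (metis image_eqI singletonD)
    thus False using inj_onD[OF p_inj _ t(1) submodC_0[OF T(1)]] t(2) by blast
  qed
  hence "p ` T = I" using simple_hitmodD[OF I(2) submodC_image[OF T(1) p_add p_rhit]] p by blast
  thus ?thesis unfolding mod_iso_def
    by (intro exI[of _ p]) (simp add: bij_betw_def p_inj p_add p_rhit)
qed

lemma simple_subset_sum_list_iso:
  assumes T: "submodC T" "simple_on sc (hitmod T)"
    and Is: "\<And>I. I \<in> set Is \<Longrightarrow> submodC I \<and> (I = {0} \<or> simple_on sc (hitmod I))"
    and sub: "T \<subseteq> sum_list Is"
  shows "\<exists>I\<in>set Is. I \<noteq> {0} \<and> mod_iso sc (hitmod T) (hitmod I)"
  using Is sub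
proof (induct Is)
  case Nil
  thus ?case using simple_hitmod_nonzero[OF T(2)] submodC_0[OF T(1)] by auto
next
  case (Cons I Is)
  let ?Y = "sum_list Is"
  have I: "submodC I" "I = {0} \<or> simple_on sc (hitmod I)" and Y: "submodC ?Y"
    using Cons.prems by (auto intro: submodC_sum_list)
  have TIY: "T \<subseteq> I + ?Y" using Cons.prems by simp
  show ?case
  proof (cases "T \<inter> ?Y = {0}")
    case False
    hence "T \<subseteq> ?Y" using simple_hitmodD[OF T(2) submodC_Int[OF T(1) Y]] by blast
    thus ?thesis using Cons by auto
  next
    case True
    have "I \<noteq> {0}"
    proof
      assume "I = {0}"
      hence "T \<subseteq> T \<inter> ?Y" using TIY by auto
      thus False using True simple_hitmod_nonzero[OF T(2)] by blast
    qed
    moreover have "mod_iso sc (hitmod T) (hitmod I)"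
      using hitmod_iso_of_subset_plus[OF T I(1) _ Y TIY True] I(2) calculation by blast
    ultimately show ?thesis by simp
  qed
qed

lemma submodC_cyclic: "submodC {rhit t f | f. f \<in> dualC sc}"
  unfolding submodC_def VS.subspace_def
proof (intro conjI ballI allI)
  show "0 \<in> {rhit t f | f. f \<in> dualC sc}"
    using rhit_zero_fun zero_dualC by (intro CollectI exI[of _ "\<lambda>c. 0"]) simp
next
  fix x y assume "x \<in> {rhit t f | f. f \<in> dualC sc}" "y \<in> {rhit t f | f. f \<in> dualC sc}"
  then obtain f g where "f \<in> dualC sc" "g \<in> dualC sc" "x = rhit t f" "y = rhit t g" by blast
  thus "x + y \<in> {rhit t f | f. f \<in> dualC sc}"
    using rhit_add_fun add_dualC by (intro CollectI exI[of _ "\<lambda>c. f c + g c"]) simp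
next
  fix x g assume "x \<in> {rhit t f | f. f \<in> dualC sc}" and g: "g \<in> dualC sc"
  then obtain f where "f \<in> dualC sc" "x = rhit t f" by blast
  thus "rhit x g \<in> {rhit t f | f. f \<in> dualC sc}"
    using rhit_rhit conv_dualC g by (intro CollectI exI[of _ "conv delta f g"]) (simp add: dualCD)
next
  fix a x assume "x \<in> {rhit t f | f. f \<in> dualC sc}"
  then obtain f where f: "f \<in> dualC sc" "x = rhit t f" by blast
  have "sc a x = rhit t (conv delta f (\<lambda>c. a * eps c))"
    using rhit_rhit[OF dualCD[OF f(1)] dualCD[OF eps_scale_dualC], of t a] f(2)
      by (simp add: rhit_eps_scale)
  thus "sc a x \<in> {rhit t f | f. f \<in> dualC sc}"
    using conv_dualC[OF f(1) eps_scale_dualC] by blast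
qed

lemma simple_hitmod_cyclic:
  assumes T: "submodC T" "simple_on sc (hitmod T)" and t: "t \<in> T" "t \<noteq> 0"
  shows "T = {rhit t f | f. f \<in> dualC sc}"
proof -
  have "{rhit t f | f. f \<in> dualC sc} \<subseteq> T" using submodC_rhit[OF T(1) t(1)] by blast
  moreover have "t \<in> {rhit t f | f. f \<in> dualC sc}"
    using rhit_eps eps_dualC by (intro CollectI exI[of _ eps]) simp
  ultimately show ?thesis using simple_hitmodD[OF T(2) submodC_cyclic] t(2) by blast
qed

end

locale simple_rational_right_mod = rational_right_mod sc delta eps M lam + simple_right_mod sc delta eps M
  for sc :: "'k::field \<Rightarrow> 'c::ab_group_add \<Rightarrow> 'c" and delta eps and M :: "('c \<Rightarrow> 'k, 'm) amod" and lam
begin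

definition coef_image :: "('m \<Rightarrow> 'k) \<Rightarrow> 'c set" where
  "coef_image \<phi> = coef \<phi> ` Cr"

lemma submodC_coef_image: assumes ph: "mlin eps M \<phi>" shows "submodC (coef_image \<phi>)"
  unfolding submodC_def VS.subspace_def coef_image_def
proof (intro conjI ballI allI)
  show "0 \<in> coef \<phi> ` Cr" using coef_zero[OF ph] z_in by force
next
  fix x y assume "x \<in> coef \<phi> ` Cr" "y \<in> coef \<phi> ` Cr"
  then obtain a b where "a \<in> Cr" "b \<in> Cr" "x = coef \<phi> a" "y = coef \<phi> b" by auto
  thus "x + y \<in> coef \<phi> ` Cr" using coef_pl[OF ph] pl_closed by (metis image_eqI)
next
  fix c x assume "x \<in> coef \<phi> ` Cr"
  then obtain a where "a \<in> Cr" "x = coef \<phi> a" by auto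
  thus "sc c x \<in> coef \<phi> ` Cr" using coef_msc[OF ph] msc_closed by (metis image_eqI)
next
  fix x f assume "x \<in> coef \<phi> ` Cr" "f \<in> dualC sc"
  then obtain a where "a \<in> Cr" "x = coef \<phi> a" by auto
  thus "rhit x f \<in> coef \<phi> ` Cr" using coef_act[OF ph \<open>f \<in> dualC sc\<close>] act_closed[OF \<open>f \<in> dualC sc\<close>]
    by (metis image_eqI)
qed

lemma submod_coef_preimage: assumes ph: "mlin eps M \<phi>" and N: "submodC N"
  shows "submod sc M {m \<in> Cr. coef \<phi> m \<in> N}"
  unfolding submod_def
  using z_in coef_zero[OF ph] submodC_0[OF N] pl_closed coef_pl[OF ph] submodC_add[OF N]
    act_closed coef_act[OF ph] submodC_rhit[OF N]
  by auto

lemma simple_coef_image: assumes ph: "mlin eps M \<phi>" and nz: "coef_image \<phi> \<noteq> {0}"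
  shows "simple_on sc (hitmod (coef_image \<phi>))"
  unfolding simple_hitmod_iff
proof (intro conjI allI impI)
  show "coef_image \<phi> \<noteq> {0}" by (rule nz)
next
  fix N assume "submodC N \<and> N \<subseteq> coef_image \<phi>"
  hence N: "submodC N" "N \<subseteq> coef_image \<phi>" by auto
  let ?P = "{m \<in> Cr. coef \<phi> m \<in> N}"
  have "?P = {z} \<or> ?P = Cr" using simple submod_coef_preimage[OF ph N(1)] unfolding simple_on_def by blast
  thus "N = {0} \<or> N = coef_image \<phi>"
  proof
    assume P: "?P = {z}"
    have "N \<subseteq> {0}"
    proof
      fix n assume "n \<in> N"
      then obtain m where m: "m \<in> Cr" "n = coef \<phi> m" using N(2) unfolding coef_image_def by auto
      hence "m = z" using P \<open>n \<in> N\<close> by blast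
      thus "n \<in> {0}" using m coef_zero[OF ph] by simp
    qed
    thus ?thesis using submodC_0[OF N(1)] by auto
  next
    assume "?P = Cr"
    hence "coef_image \<phi> \<subseteq> N" unfolding coef_image_def by blast
    thus ?thesis using N(2) by simp
  qed
qed

lemma iso_coef_image: assumes ph: "mlin eps M \<phi>" and nz: "coef_image \<phi> \<noteq> {0}"
  shows "mod_iso sc M (hitmod (coef_image \<phi>))"
proof -
  let ?N = "{m \<in> Cr. coef \<phi> m = 0}"
  have "submod sc M ?N" using submod_coef_preimage[OF ph submodC_zero] by simp
  hence "?N = {z} \<or> ?N = Cr" using simple unfolding simple_on_def by blast
  moreover have "?N \<noteq> Cr" using nz submodC_coef_image[OF ph] submodC_0 unfolding coef_image_def by auto
  ultimately have N: "?N = {z}" by blast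
  have inj: "inj_on (coef \<phi>) Cr"
  proof (rule inj_onI)
    fix a b assume ab: "a \<in> Cr" "b \<in> Cr" "coef \<phi> a = coef \<phi> b"
    obtain nb where nb: "nb \<in> Cr" "pl b nb = z" using pl_inverse ab by blast
    have "coef \<phi> (pl a nb) = coef \<phi> a + coef \<phi> nb" using coef_pl[OF ph] ab nb by simp
    also have "\<dots> = coef \<phi> (pl b nb)" using coef_pl[OF ph, of b nb] ab nb by simp
    also have "\<dots> = 0" using nb coef_zero[OF ph] by simp
    finally have "pl a nb \<in> ?N" using pl_closed ab nb by simp
    hence "pl a nb = pl b nb" using N nb by simp
    thus "a = b" using pl_cancel_right ab nb by blast
  qed
  show ?thesis unfolding mod_iso_def
  proof (intro exI[of _ "coef \<phi>"] conjI ballI)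
    show "bij_betw (coef \<phi>) Cr (carr (hitmod (coef_image \<phi>)))"
      using inj by (simp add: bij_betw_def coef_image_def)
  next
    fix x y assume "x \<in> Cr" "y \<in> Cr"
    thus "coef \<phi> (pl x y) = pls (hitmod (coef_image \<phi>)) (coef \<phi> x) (coef \<phi> y)" using coef_pl[OF ph] by simp
  next
    fix f x assume "f \<in> dualC sc" "x \<in> Cr"
    thus "coef \<phi> (act M f x) = act (hitmod (coef_image \<phi>)) f (coef \<phi> x)" using coef_act[OF ph] by simp
  qed
qed

end

context coalg begin

lemma finite_submodC_containing:
  "\<exists>R P. submodC R \<and> set cs \<subseteq> R \<and> finite P \<and> R \<subseteq> VS.span P"
proof -
  define P where "P = snd ` (\<Union>c\<in>set cs. set (delta c))"
  define Gen where "Gen = {rhit c f | c f. c \<in> set cs \<and> f \<in> dualC sc}"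
  have "Gen \<subseteq> VS.span P"
  proof
    fix g assume "g \<in> Gen"
    then obtain c f where cf: "c \<in> set cs" "g = rhit c f" unfolding Gen_def by blast
    have "snd ` set (delta c) \<subseteq> P" unfolding P_def using cf(1) by blast
    thus "g \<in> VS.span P" using rhit_in_span[of c f] VS.span_mono cf(2) by blast
  qed
  hence "VS.span Gen \<subseteq> VS.span P" using VS.span_minimal by blast
  moreover have "set cs \<subseteq> VS.span Gen"
  proof
    fix c assume "c \<in> set cs"
    hence "rhit c eps \<in> Gen" unfolding Gen_def using eps_dualC by blast
    thus "c \<in> VS.span Gen" using rhit_eps VS.span_base by metis
  qed
  moreover have "submodC (VS.span Gen)" unfolding submodC_def
  proof (intro conjI ballI)
    fix x g assume x: "x \<in> VS.span Gen" and g: "g \<in> dualC sc"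
    have "rhit y g \<in> Gen" if "y \<in> Gen" for y
    proof -
      obtain c f where cf: "c \<in> set cs" "f \<in> dualC sc" "y = rhit c f"
        using \<open>y \<in> Gen\<close> unfolding Gen_def by blast
      thus ?thesis using g conv_dualC unfolding Gen_def by (auto simp: rhit_rhit dualCD)
    qed
    hence "(\<lambda>c. rhit c g) ` Gen \<subseteq> VS.span Gen" using VS.span_base by blast
    thus "rhit x g \<in> VS.span Gen"
      using VS.linear_image_span_subset[OF rhit_linear[OF dualCD[OF g]]] x by blast
  qed simp
  moreover have "finite P" unfolding P_def by simp
  ultimately show ?thesis by blast
qed

text \<open>A nonzero submodule of minimal dimension is simple.\<close>

lemma exists_simple_submodC:
  assumes N: "submodC N" "N \<noteq> {0}" and P: "N \<subseteq> VS.span P" "finite P"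
  shows "\<exists>T. submodC T \<and> T \<subseteq> N \<and> simple_on sc (hitmod T)"
proof -
  have "submodC N \<and> N \<subseteq> N \<and> N \<noteq> {0}" using N by blast
  from ex_has_least_nat[of "\<lambda>T. submodC T \<and> T \<subseteq> N \<and> T \<noteq> {0}", OF this, of VS.dim]
  obtain T where T: "submodC T" "T \<subseteq> N" "T \<noteq> {0}"
    and T_min: "\<And>N'. submodC N' \<Longrightarrow> N' \<subseteq> N \<Longrightarrow> N' \<noteq> {0} \<Longrightarrow> VS.dim T \<le> VS.dim N'" by blast
  have "simple_on sc (hitmod T)" unfolding simple_hitmod_iff
  proof (intro conjI allI impI)
    fix N' assume N': "submodC N' \<and> N' \<subseteq> T"
    show "N' = {0} \<or> N' = T"
    proof (cases "N' = {0}")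
      case False
      hence "VS.dim T \<le> VS.dim N'" using T_min N' T(2) by blast
      thus ?thesis using VS.subspace_eq_if_dim_le[of N' T P] N' T(2) P unfolding submodC_def by blast
    qed simp
  qed (rule T(3))
  thus ?thesis using T by blast
qed

end

locale infinitely_many_simples = coalg sc delta eps
  for sc :: "'k::field \<Rightarrow> 'c::ab_group_add \<Rightarrow> 'c" and delta eps +
  fixes S :: "('c \<Rightarrow> 'k, 'm) amod set"
  assumes S_infinite: "infinite S"
    and S_simple_rational: "\<And>M. M \<in> S \<Longrightarrow> simple_right sc delta eps M \<and> rational_right sc delta eps M"
    and S_noniso: "\<And>M N. M \<in> S \<Longrightarrow> N \<in> S \<Longrightarrow> M \<noteq> N \<Longrightarrow> \<not> mod_iso sc M N"
begin

definition comod :: "('c \<Rightarrow> 'k, 'm) amod \<Rightarrow> 'm \<Rightarrow> ('c \<times> 'm) list" where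
  "comod M = (SOME lam. left_comod sc delta eps M lam \<and>
     (\<forall>f\<in>dualC sc. \<forall>x\<in>carr M. act M f x = msum M (map (\<lambda>(c,u). msc eps M (f c) u) (lam x))))"

lemma simple_rational_right_mod: assumes "M \<in> S" shows "simple_rational_right_mod sc delta eps M (comod M)"
proof -
  have M: "simple_right sc delta eps M" "rational_right sc delta eps M"
    using S_simple_rational assms by auto
  hence "\<exists>lam. left_comod sc delta eps M lam \<and>
     (\<forall>f\<in>dualC sc. \<forall>x\<in>carr M. act M f x = msum M (map (\<lambda>(c,u). msc eps M (f c) u) (lam x)))"
    unfolding rational_right_def by blast
  hence "left_comod sc delta eps M (comod M) \<and>
     (\<forall>f\<in>dualC sc. \<forall>x\<in>carr M. act M f x = msum M (map (\<lambda>(c,u). msc eps M (f c) u) (comod M x)))"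
    unfolding comod_def by (rule someI_ex)
  with M show ?thesis
    by unfold_locales (auto simp: simple_right_def)
qed

definition coefM :: "('c \<Rightarrow> 'k, 'm) amod \<Rightarrow> ('m \<Rightarrow> 'k) \<Rightarrow> 'm \<Rightarrow> 'c" where
  "coefM M = rational_right_mod.coef sc (comod M)"

definition coef_space :: "('c \<Rightarrow> 'k, 'm) amod set \<Rightarrow> 'c set" where
  "coef_space X = VS.span {coefM M \<phi> y | M \<phi> y. M \<in> X \<and> mlin eps M \<phi> \<and> y \<in> carr M}"

lemma coef_space_mono: "X \<subseteq> Y \<Longrightarrow> coef_space X \<subseteq> coef_space Y"
  unfolding coef_space_def by (intro VS.span_mono) blast

lemma coef_space_hit_closed:
  assumes X: "X \<subseteq> S" and f: "f \<in> dualC sc" and w: "w \<in> coef_space X"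
  shows "rhit w f \<in> coef_space X" and "lhit f w \<in> coef_space X"
proof -
  define G where "G = {coefM M \<phi> y | M \<phi> y. M \<in> X \<and> mlin eps M \<phi> \<and> y \<in> carr M}"
  have "rhit g f \<in> G \<and> lhit f g \<in> G" if "g \<in> G" for g
  proof -
    obtain M \<phi> y where M: "M \<in> X" "mlin eps M \<phi>" "y \<in> carr M" "g = coefM M \<phi> y"
      using \<open>g \<in> G\<close> unfolding G_def by blast
    interpret R: simple_rational_right_mod sc delta eps M "comod M"
      using simple_rational_right_mod M X by blast
    have "rhit g f = coefM M \<phi> (act M f y)" and "lhit f g = coefM M (\<lambda>x. \<phi> (act M f x)) y"
      using R.coef_act[OF M(2) f M(3)] R.lhit_coef[OF M(2) f M(3)] M(4) by (simp_all add: coefM_def)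
    thus ?thesis using M R.act_closed[OF f M(3)] R.mlin_act[OF M(2) f] unfolding G_def by blast
  qed
  hence "(\<lambda>c. rhit c f) ` G \<subseteq> VS.span G" "lhit f ` G \<subseteq> VS.span G"
    by (auto intro: VS.span_base)
  hence "(\<lambda>c. rhit c f) ` VS.span G \<subseteq> VS.span G" "lhit f ` VS.span G \<subseteq> VS.span G"
    by (simp_all add: VS.linear_image_span_subset rhit_linear lhit_linear dualCD[OF f])
  moreover have W: "coef_space X = VS.span G" unfolding coef_space_def G_def ..
  ultimately show "rhit w f \<in> coef_space X" "lhit f w \<in> coef_space X"
    using w unfolding W by (simp_all add: image_subset_iff)
qed

lemma submodC_coef_space: assumes "X \<subseteq> S" shows "submodC (coef_space X)"
proof -
  have "VS.subspace (coef_space X)" unfolding coef_space_def by simp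
  thus ?thesis unfolding submodC_def using coef_space_hit_closed(1)[OF assms] by blast
qed

lemma coef_space_sum_list:
  assumes X: "X \<subseteq> S" and t: "t \<in> coef_space X"
  shows "\<exists>Is. (\<forall>I\<in>set Is. \<exists>M \<phi>. M \<in> X \<and> mlin eps M \<phi> \<and> I = coefM M \<phi> ` carr M) \<and> t \<in> sum_list Is"
  using t unfolding coef_space_def
proof (induct rule: VS.span_induct_alt)
  case base show ?case by (intro exI[of _ "[]"]) simp
next
  case (step c x y)
  then obtain Is where Is: "\<forall>I\<in>set Is. \<exists>M \<phi>. M \<in> X \<and> mlin eps M \<phi> \<and> I = coefM M \<phi> ` carr M"
    "y \<in> sum_list Is" by blast
  obtain M \<phi> m where M: "M \<in> X" "mlin eps M \<phi>" "m \<in> carr M" "x = coefM M \<phi> m"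
    using step by blast
  interpret R: simple_rational_right_mod sc delta eps M "comod M"
    using simple_rational_right_mod M X by blast
  have "sc c x = coefM M \<phi> (msc eps M c m)" using R.coef_msc[OF M(2) M(3)] M(4) by (simp add: coefM_def)
  hence "sc c x \<in> coefM M \<phi> ` carr M" using R.msc_closed[OF M(3)] by blast
  hence "sc c x + y \<in> sum_list (coefM M \<phi> ` carr M # Is)" using Is(2) by (simp add: set_plus_intro)
  moreover have "\<forall>I\<in>set (coefM M \<phi> ` carr M # Is). \<exists>M \<phi>. M \<in> X \<and> mlin eps M \<phi> \<and> I = coefM M \<phi> ` carr M"
    using Is(1) M(1,2) by auto
  ultimately show ?case by (intro exI[of _ "coefM M \<phi> ` carr M # Is"] conjI)
qed

lemma simple_in_coef_space_iso:
  assumes X: "X \<subseteq> S" and T: "submodC T" "simple_on sc (hitmod T)" and TW: "T \<subseteq> coef_space X"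
  shows "\<exists>M\<in>X. mod_iso sc M (hitmod T)"
proof -
  obtain t where t: "t \<in> T" "t \<noteq> 0" using simple_hitmod_nonzero[OF T(2)] submodC_0[OF T(1)] by blast
  have "t \<in> coef_space X" using TW t(1) by blast
  then obtain Is where Is: "\<forall>I\<in>set Is. \<exists>M \<phi>. M \<in> X \<and> mlin eps M \<phi> \<and> I = coefM M \<phi> ` carr M"
    "t \<in> sum_list Is"
    using coef_space_sum_list[OF X] by blast
  have Is_simple: "submodC I \<and> (I = {0} \<or> simple_on sc (hitmod I))" if I: "I \<in> set Is" for I
  proof -
    obtain M \<phi> where M: "M \<in> X" "mlin eps M \<phi>" "I = coefM M \<phi> ` carr M"
      using bspec[OF Is(1) I] by (elim exE conjE)
    interpret R: simple_rational_right_mod sc delta eps M "comod M"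
      using simple_rational_right_mod M X by blast
    have "I = R.coef_image \<phi>" using M(3) by (simp add: coefM_def R.coef_image_def)
    thus ?thesis using R.submodC_coef_image[OF M(2)] R.simple_coef_image[OF M(2)] by blast
  qed
  have Y: "submodC (sum_list Is)" using Is_simple by (intro submodC_sum_list) blast
  have "T \<subseteq> sum_list Is"
    using simple_hitmod_cyclic[OF T t] submodC_rhit[OF Y Is(2)] by blast
  then obtain I where I: "I \<in> set Is" "I \<noteq> {0}" "mod_iso sc (hitmod T) (hitmod I)"
    using simple_subset_sum_list_iso[OF T Is_simple] by blast
  obtain M \<phi> where M: "M \<in> X" "mlin eps M \<phi>" "I = coefM M \<phi> ` carr M"
    using bspec[OF Is(1) I(1)] by (elim exE conjE)
  interpret R: simple_rational_right_mod sc delta eps M "comod M"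
    using simple_rational_right_mod M X by blast
  have IR: "I = R.coef_image \<phi>" using M(3) by (simp add: coefM_def R.coef_image_def)
  have "mod_iso sc M (hitmod I)" using R.iso_coef_image[OF M(2)] IR I(2) by simp
  moreover have "mod_iso sc (hitmod I) (hitmod T)"
    by (rule mod_iso_sym[OF I(3)]) (auto simp: submodC_add[OF T(1)] submodC_rhit[OF T(1)])
  ultimately have "mod_iso sc M (hitmod T)" by (rule mod_iso_trans)
  thus ?thesis using M(1) by blast
qed

text \<open>Dimension descent: were R \<inter> coef_space (S - F) nonzero for every finite F, choose F
  minimising its dimension; a simple submodule T of it is isomorphic to some M1 \<notin> F, and since
  the dimension cannot drop when M1 is removed as well, also to some M2 \<notin> F \<union> {M1}.\<close>

lemma coef_space_avoids_finite_dim: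
  assumes R: "submodC R" "R \<subseteq> VS.span P" "finite P"
  shows "\<exists>F. finite F \<and> R \<inter> coef_space (S - F) \<subseteq> {0}"
proof -
  define Z where "Z F = R \<inter> coef_space (S - F)" for F
  have Z_sub: "submodC (Z F)" for F unfolding Z_def by (rule submodC_Int[OF R(1) submodC_coef_space]) blast
  obtain F0 where F0: "finite F0" "\<And>F. finite F \<Longrightarrow> VS.dim (Z F0) \<le> VS.dim (Z F)"
    using ex_has_least_nat[of finite "{}" "\<lambda>F. VS.dim (Z F)"] by auto
  have "Z F0 \<subseteq> {0}"
  proof (rule ccontr)
    assume "\<not> Z F0 \<subseteq> {0}"
    hence "Z F0 \<noteq> {0}" by blast
    then obtain T where T: "submodC T" "T \<subseteq> Z F0" "simple_on sc (hitmod T)"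
      using exists_simple_submodC[OF Z_sub _ _ R(3)] R(2) Z_def by blast
    have iso_outside: "\<exists>M\<in>S - F. mod_iso sc M (hitmod T)" if "Z F = Z F0" for F
      using simple_in_coef_space_iso[OF _ T(1,3)] T(2) that unfolding Z_def by blast
    obtain M1 where M1: "M1 \<in> S - F0" "mod_iso sc M1 (hitmod T)"
      using iso_outside[of F0] by blast
    have "Z (insert M1 F0) \<subseteq> Z F0"
      unfolding Z_def using coef_space_mono[of "S - insert M1 F0" "S - F0"] by blast
    hence "Z (insert M1 F0) = Z F0"
      using VS.subspace_eq_if_dim_le[of "Z (insert M1 F0)" "Z F0" P] Z_sub F0 R Z_def
      unfolding submodC_def by blast
    then obtain M2 where M2: "M2 \<in> S - insert M1 F0" "mod_iso sc M2 (hitmod T)"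
      using iso_outside by blast
    interpret R2: right_mod sc delta eps M2
      using S_simple_rational M2(1) coalg_axioms
        by (simp add: right_mod_def right_mod_axioms_def simple_right_def)
    have "mod_iso sc (hitmod T) M2" using mod_iso_sym[OF M2(2)] R2.pl_closed R2.act_closed by blast
    hence "mod_iso sc M1 M2" using mod_iso_trans[OF M1(2)] by blast
    thus False using S_noniso M1(1) M2(1) by blast
  qed
  thus ?thesis using F0(1) Z_def by blast
qed

definition cofinite_ann :: "('c \<Rightarrow> 'k) set" where
  "cofinite_ann = {f \<in> dualC sc. \<exists>F. finite F \<and> (\<forall>w\<in>coef_space (S - F). f w = 0)}"

lemma cofinite_ann_dualC: "cofinite_ann \<subseteq> dualC sc"
  unfolding cofinite_ann_def by blast

lemma zero_cofinite_ann: "(\<lambda>c. 0) \<in> cofinite_ann"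
  unfolding cofinite_ann_def using zero_dualC by blast

lemma add_cofinite_ann: assumes "f \<in> cofinite_ann" "g \<in> cofinite_ann" shows "(\<lambda>c. f c + g c) \<in> cofinite_ann"
proof -
  obtain F1 F2 where F: "finite F1" "\<forall>w\<in>coef_space (S - F1). f w = 0"
    "finite F2" "\<forall>w\<in>coef_space (S - F2). g w = 0"
    using assms unfolding cofinite_ann_def by blast
  have "coef_space (S - (F1 \<union> F2)) \<subseteq> coef_space (S - F1) \<inter> coef_space (S - F2)"
    using coef_space_mono[of "S - (F1 \<union> F2)"] by blast
  hence "\<forall>w\<in>coef_space (S - (F1 \<union> F2)). f w + g w = 0" using F(2,4) by (simp add: subset_iff)
  moreover have "(\<lambda>c. f c + g c) \<in> dualC sc" using assms add_dualC cofinite_ann_dualC by blast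
  ultimately show ?thesis unfolding cofinite_ann_def using F(1,3) by blast
qed

lemma conv_cofinite_ann:
  assumes g: "g \<in> dualC sc" and f: "f \<in> cofinite_ann"
  shows "conv delta g f \<in> cofinite_ann" and "conv delta f g \<in> cofinite_ann"
proof -
  obtain F where F: "finite F" "\<forall>w\<in>coef_space (S - F). f w = 0" using f unfolding cofinite_ann_def by blast
  have lf: "lfun sc f" using f cofinite_ann_dualC dualCD by blast
  have "conv delta g f w = 0" "conv delta f g w = 0" if "w \<in> coef_space (S - F)" for w
    using coef_space_hit_closed[OF _ g that] F(2)
      by (simp_all add: lfun_rhit[OF lf, symmetric] lfun_lhit[OF lf, symmetric])
  moreover have "conv delta g f \<in> dualC sc" "conv delta f g \<in> dualC sc"
    using g f cofinite_ann_dualC conv_dualC by blast+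
  ultimately show "conv delta g f \<in> cofinite_ann" "conv delta f g \<in> cofinite_ann"
    unfolding cofinite_ann_def using F(1) by blast+
qed

lemma eps_notin_cofinite_ann: "eps \<notin> cofinite_ann"
proof
  assume "eps \<in> cofinite_ann"
  then obtain F where F: "finite F" "\<forall>w\<in>coef_space (S - F). eps w = 0" unfolding cofinite_ann_def by blast
  obtain M where M: "M \<in> S - F" using S_infinite F(1) by (metis Diff_eq_empty_iff finite_subset ex_in_conv)
  interpret R: simple_rational_right_mod sc delta eps M "comod M" using simple_rational_right_mod M by blast
  obtain x where x: "x \<in> carr M" "x \<noteq> zer M" using R.simple R.z_in unfolding simple_on_def by blast
  obtain \<phi> where \<phi>: "mlin eps M \<phi>" "\<phi> x = 1" using R.exists_mlin_eq_1[OF x] by blast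
  have "coefM M \<phi> x \<in> coef_space (S - F)"
    unfolding coef_space_def using M \<phi> x by (intro VS.span_base) blast
  moreover have "eps (coefM M \<phi> x) = 1" using R.eps_coef[OF \<phi>(1) x(1)] \<phi>(2) by (simp add: coefM_def)
  ultimately show False using F by simp
qed

lemma cofinite_ann_dense: "\<exists>j\<in>cofinite_ann. \<forall>c\<in>set cs. j c = eps c"
proof -
  obtain R P where R: "submodC R" "set cs \<subseteq> R" "finite P" "R \<subseteq> VS.span P"
    using finite_submodC_containing by blast
  obtain F where F: "finite F" "R \<inter> coef_space (S - F) \<subseteq> {0}"
    using coef_space_avoids_finite_dim[OF R(1,4,3)] by blast
  obtain B where B: "B \<subseteq> R" "VS.independent B" "R \<subseteq> VS.span B"
    by (rule VS.basis_exists)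
  have "VS.span B \<subseteq> R" using B(1) VS.span_minimal R(1) unfolding submodC_def by blast
  hence "VS.span B \<inter> coef_space (S - F) \<subseteq> {0}" using F(2) by blast
  moreover have "VS.subspace (coef_space (S - F))" using submodC_coef_space unfolding submodC_def by blast
  ultimately obtain j where j: "Vector_Spaces.linear sc (*) j" "\<forall>x\<in>coef_space (S - F). j x = 0"
    "\<forall>b\<in>B. j b = eps b"
    using VS.linear_functional_extension[OF _ B(2), of _ eps] by blast
  interpret P: vector_space_pair sc "(*) :: 'k \<Rightarrow> 'k \<Rightarrow> 'k"
    using VS.vector_space_axioms field_vector_space by (simp add: vector_space_pair_def)
  have "j x = eps x" if "x \<in> R" for x
    using P.linear_eq_on[OF j(1) lfun_eps[unfolded lfun_def], of x B] that B(3) j(3) by blast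
  moreover have "j \<in> cofinite_ann" unfolding cofinite_ann_def
    using j(1,2) F(1) by (auto simp: dualC_def lfun_def)
  ultimately show ?thesis using R(2) by blast
qed

end

text \<open>m g f is the action of g \<in> A on f \<in> A by which A becomes a module over itself (left
  multiplication, or right multiplication for right modules); mul is the matching product, so
  that m (mul f g) acts as m f after m g.\<close>

locale self_action = coalg sc delta eps
  for sc :: "'k::field \<Rightarrow> 'c::ab_group_add \<Rightarrow> 'c" and delta eps +
  fixes m :: "('c \<Rightarrow> 'k) \<Rightarrow> ('c \<Rightarrow> 'k) \<Rightarrow> ('c \<Rightarrow> 'k)"
    and mul :: "('c \<Rightarrow> 'k) \<Rightarrow> ('c \<Rightarrow> 'k) \<Rightarrow> ('c \<Rightarrow> 'k)"
  assumes m_dualC: "f \<in> dualC sc \<Longrightarrow> x \<in> dualC sc \<Longrightarrow> m f x \<in> dualC sc"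
    and m_add_left: "m (\<lambda>c. f c + g c) x = (\<lambda>c. m f x c + m g x c)"
    and m_add_right: "m f (\<lambda>c. x c + y c) = (\<lambda>c. m f x c + m f y c)"
    and m_diff_right: "m f (\<lambda>c. x c - y c) = (\<lambda>c. m f x c - m f y c)"
    and m_zero_left: "m (\<lambda>c. 0) x = (\<lambda>c. 0)"
    and m_neg_eps: "x \<in> dualC sc \<Longrightarrow> m (\<lambda>c. - eps c) x = (\<lambda>c. - x c)"
    and m_eps_left: "x \<in> dualC sc \<Longrightarrow> m eps x = x"
    and m_eps_right: "f \<in> dualC sc \<Longrightarrow> m f eps = f"
    and m_mul: "f \<in> dualC sc \<Longrightarrow> g \<in> dualC sc \<Longrightarrow> x \<in> dualC sc \<Longrightarrow> m (mul f g) x = m f (m g x)"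
begin

definition ideal :: "('c \<Rightarrow> 'k) set \<Rightarrow> bool" where
  "ideal L \<longleftrightarrow> L \<subseteq> dualC sc \<and> (\<lambda>c. 0) \<in> L \<and>
     (\<forall>f\<in>L. \<forall>g\<in>L. (\<lambda>c. f c + g c) \<in> L) \<and> (\<forall>g\<in>dualC sc. \<forall>f\<in>L. m g f \<in> L)"

lemma idealI:
  "L \<subseteq> dualC sc \<Longrightarrow> (\<lambda>c. 0) \<in> L \<Longrightarrow> (\<And>f g. f \<in> L \<Longrightarrow> g \<in> L \<Longrightarrow> (\<lambda>c. f c + g c) \<in> L) \<Longrightarrow>
    (\<And>g f. g \<in> dualC sc \<Longrightarrow> f \<in> L \<Longrightarrow> m g f \<in> L) \<Longrightarrow> ideal L"
  unfolding ideal_def by blast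

lemma idealD:
  assumes "ideal L"
  shows "L \<subseteq> dualC sc" "(\<lambda>c. 0) \<in> L" "f \<in> L \<Longrightarrow> g \<in> L \<Longrightarrow> (\<lambda>c. f c + g c) \<in> L"
    "g \<in> dualC sc \<Longrightarrow> f \<in> L \<Longrightarrow> m g f \<in> L"
  using assms unfolding ideal_def by blast+

lemma ideal_Union_chain:
  assumes C: "C \<noteq> {}" "subset.chain {L. ideal L} C" shows "ideal (\<Union>C)"
proof -
  have I: "ideal X" if "X \<in> C" for X
    using C(2) that by (auto simp: subset_chain_def)
  have chain: "X \<subseteq> Y \<or> Y \<subseteq> X" if "X \<in> C" "Y \<in> C" for X Y
    using C(2) that by (auto simp: subset_chain_def)
  show ?thesis
  proof (rule idealI)
    show "\<Union>C \<subseteq> dualC sc" using idealD(1)[OF I] by auto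
    obtain X where "X \<in> C" using C(1) by auto
    thus "(\<lambda>c. 0) \<in> \<Union>C" using idealD(2)[OF I] by auto
  next
    fix g f assume g: "g \<in> dualC sc" and "f \<in> \<Union>C"
    then obtain X where X: "X \<in> C" "f \<in> X" by auto
    hence "m g f \<in> X" using idealD(4)[OF I[OF X(1)] g] by simp
    thus "m g f \<in> \<Union>C" using X(1) by auto
  next
    fix f g assume "f \<in> \<Union>C" "g \<in> \<Union>C"
    then obtain X Y where XY: "X \<in> C" "Y \<in> C" "f \<in> X" "g \<in> Y" by auto
    have "(\<lambda>c. f c + g c) \<in> X \<union> Y"
    proof (cases "X \<subseteq> Y")
      case True thus ?thesis using idealD(3)[OF I[OF XY(2)], of f g] XY by auto
    next
      case False
      hence "Y \<subseteq> X" using chain[OF XY(1,2)] by auto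
      thus ?thesis using idealD(3)[OF I[OF XY(1)], of f g] XY by auto
    qed
    thus "(\<lambda>c. f c + g c) \<in> \<Union>C" using XY(1,2) by auto
  qed
qed

lemma exists_maximal_ideal:
  assumes J: "ideal J" "eps \<notin> J"
  shows "\<exists>L. ideal L \<and> J \<subseteq> L \<and> eps \<notin> L \<and> (\<forall>L'. ideal L' \<and> L \<subseteq> L' \<and> eps \<notin> L' \<longrightarrow> L' = L)"
proof -
  define Fam where "Fam = {L. ideal L \<and> J \<subseteq> L \<and> eps \<notin> L}"
  have "\<exists>L\<in>Fam. \<forall>X\<in>Fam. L \<subseteq> X \<longrightarrow> X = L"
  proof (rule subset_Zorn_nonempty)
    show "Fam \<noteq> {}" using J unfolding Fam_def by auto
  next
    fix C assume C: "C \<noteq> {}" "subset.chain Fam C"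
    hence "subset.chain {L. ideal L} C" by (auto simp: Fam_def subset_chain_def)
    hence "ideal (\<Union>C)" using ideal_Union_chain C(1) by simp
    moreover obtain X0 where "X0 \<in> C" using C(1) by auto
    hence "J \<subseteq> \<Union>C" using C(2) by (auto simp: Fam_def subset_chain_def)
    moreover have "eps \<notin> \<Union>C" using C(2) by (auto simp: Fam_def subset_chain_def)
    ultimately show "\<Union>C \<in> Fam" unfolding Fam_def by simp
  qed
  then obtain L where L: "ideal L" "J \<subseteq> L" "eps \<notin> L" "\<forall>X\<in>Fam. L \<subseteq> X \<longrightarrow> X = L"
    unfolding Fam_def by auto
  have "L' = L" if "ideal L'" "L \<subseteq> L'" "eps \<notin> L'" for L'
    using L(2,4) that unfolding Fam_def by auto
  with L(1-3) show ?thesis by auto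
qed

end

locale maximal_ideal = self_action sc delta eps m mul
  for sc :: "'k::field \<Rightarrow> 'c::ab_group_add \<Rightarrow> 'c" and delta eps m mul +
  fixes L :: "('c \<Rightarrow> 'k) set"
  assumes ideal_L: "ideal L" and eps_notin: "eps \<notin> L"
    and maximal: "\<And>L'. ideal L' \<Longrightarrow> L \<subseteq> L' \<Longrightarrow> eps \<notin> L' \<Longrightarrow> L' = L"
begin

lemmas L_dualC = idealD(1)[OF ideal_L]
  and zero_L = idealD(2)[OF ideal_L]
  and add_L = idealD(3)[OF ideal_L]
  and m_L = idealD(4)[OF ideal_L]

lemma neg_L: assumes f: "f \<in> L" shows "(\<lambda>c. - f c) \<in> L"
  using m_L[OF neg_eps_dualC f] m_neg_eps f L_dualC by auto

definition eqv :: "('c \<Rightarrow> 'k) \<Rightarrow> ('c \<Rightarrow> 'k) \<Rightarrow> bool" where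
  "eqv f g \<longleftrightarrow> (\<lambda>c. f c - g c) \<in> L"

lemma eqv_refl: "eqv f f"
  and eqv_sym: "eqv f g \<Longrightarrow> eqv g f"
  and eqv_trans: "eqv f g \<Longrightarrow> eqv g h \<Longrightarrow> eqv f h"
  and eqv_add: "eqv f1 g1 \<Longrightarrow> eqv f2 g2 \<Longrightarrow> eqv (\<lambda>c. f1 c + f2 c) (\<lambda>c. g1 c + g2 c)"
  and eqv_m: "g \<in> dualC sc \<Longrightarrow> eqv f1 f2 \<Longrightarrow> eqv (m g f1) (m g f2)"
  unfolding eqv_def
  using zero_L neg_L[of "\<lambda>c. f c - g c"] add_L[of "\<lambda>c. f c - g c" "\<lambda>c. g c - h c"]
    add_L[of "\<lambda>c. f1 c - g1 c" "\<lambda>c. f2 c - g2 c"] m_L[of g "\<lambda>c. f1 c - f2 c"] m_diff_right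
  by (simp_all add: algebra_simps)

text \<open>rep f is a representative of the class f + L; the quotient A/L is the set of representatives.\<close>

definition rep :: "('c \<Rightarrow> 'k) \<Rightarrow> ('c \<Rightarrow> 'k)" where
  "rep f = (SOME g. g \<in> dualC sc \<and> eqv g f)"

lemma rep_dualC: "f \<in> dualC sc \<Longrightarrow> rep f \<in> dualC sc"
  and rep_eqv: "f \<in> dualC sc \<Longrightarrow> eqv (rep f) f"
  unfolding rep_def using someI[of "\<lambda>g. g \<in> dualC sc \<and> eqv g f" f] eqv_refl by blast+

lemma rep_cong: assumes "eqv f g" shows "rep f = rep g"
proof -
  have "(\<lambda>h. h \<in> dualC sc \<and> eqv h f) = (\<lambda>h. h \<in> dualC sc \<and> eqv h g)"
    using assms eqv_trans eqv_sym by (intro ext) blast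
  thus ?thesis unfolding rep_def by simp
qed

lemma rep_eq_iff: assumes f: "f \<in> dualC sc" and g: "g \<in> dualC sc" shows "rep f = rep g \<longleftrightarrow> eqv f g"
proof
  assume "rep f = rep g"
  thus "eqv f g" using eqv_sym[OF rep_eqv[OF f]] rep_eqv[OF g] eqv_trans by metis
qed (rule rep_cong)

lemma rep_rep: "f \<in> dualC sc \<Longrightarrow> rep (rep f) = rep f"
  using rep_cong rep_eqv by blast

lemma rep_add_rep: "f \<in> dualC sc \<Longrightarrow> rep (\<lambda>c. rep f c + g c) = rep (\<lambda>c. f c + g c)"
  and rep_add_rep': "g \<in> dualC sc \<Longrightarrow> rep (\<lambda>c. f c + rep g c) = rep (\<lambda>c. f c + g c)"
  and rep_m_rep: "g \<in> dualC sc \<Longrightarrow> f \<in> dualC sc \<Longrightarrow> rep (m g (rep f)) = rep (m g f)"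
  by (intro rep_cong eqv_add eqv_m rep_eqv eqv_refl; assumption)+

definition quot_mod :: "('c \<Rightarrow> 'k, 'c \<Rightarrow> 'k) amod" where
  "quot_mod = \<lparr>carr = rep ` dualC sc, zer = rep (\<lambda>c. 0), pls = (\<lambda>x y. rep (\<lambda>c. x c + y c)),
         act = (\<lambda>f x. rep (m f x))\<rparr>"

lemma quot_mod_simps [simp]: "carr quot_mod = rep ` dualC sc" "zer quot_mod = rep (\<lambda>c. 0)"
  "pls quot_mod x y = rep (\<lambda>c. x c + y c)" "act quot_mod f x = rep (m f x)"
  by (simp_all add: quot_mod_def)

lemma carr_quot_modD: "x \<in> carr quot_mod \<Longrightarrow> x \<in> dualC sc \<and> rep x = x"
  using rep_dualC rep_rep by auto

lemma quot_mod_amod: "is_amod sc mul eps quot_mod"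
  unfolding is_amod_def
proof (intro conjI ballI)
  fix x y w assume x: "x \<in> carr quot_mod" and y: "y \<in> carr quot_mod" and w: "w \<in> carr quot_mod"
  have xyw: "x \<in> dualC sc" "y \<in> dualC sc" "w \<in> dualC sc"
    using carr_quot_modD[OF x] carr_quot_modD[OF y] carr_quot_modD[OF w] by blast+
  show "pls quot_mod x y \<in> carr quot_mod" using add_dualC xyw by simp
  show "pls quot_mod (pls quot_mod x y) w = pls quot_mod x (pls quot_mod y w)"
    using xyw by (simp add: rep_add_rep rep_add_rep' add_dualC add.assoc)
  show "pls quot_mod x y = pls quot_mod y x" by (simp add: add.commute)
  show "pls quot_mod (zer quot_mod) x = x" using carr_quot_modD[OF x] by (simp add: rep_add_rep zero_dualC)
  have neg_x: "(\<lambda>c. - x c) \<in> dualC sc"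
    using m_dualC[OF neg_eps_dualC xyw(1)] m_neg_eps[OF xyw(1)] by simp
  show "\<exists>y\<in>carr quot_mod. pls quot_mod x y = zer quot_mod"
    using rep_add_rep'[OF neg_x, of x] neg_x by (intro bexI[of _ "rep (\<lambda>c. - x c)"]) auto
next
  fix f g x y assume f: "f \<in> dualC sc" and g: "g \<in> dualC sc"
    and x: "x \<in> carr quot_mod" and y: "y \<in> carr quot_mod"
  have xy: "x \<in> dualC sc" "y \<in> dualC sc" using carr_quot_modD[OF x] carr_quot_modD[OF y] by blast+
  show "act quot_mod f x \<in> carr quot_mod" using m_dualC f xy by simp
  show "act quot_mod f (pls quot_mod x y) = pls quot_mod (act quot_mod f x) (act quot_mod f y)"
    using f xy by (simp add: rep_m_rep rep_add_rep rep_add_rep' add_dualC m_dualC m_add_right)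
  show "act quot_mod (\<lambda>c. f c + g c) x = pls quot_mod (act quot_mod f x) (act quot_mod g x)"
    using f g xy by (simp add: rep_add_rep rep_add_rep' m_dualC m_add_left)
  show "act quot_mod (mul f g) x = act quot_mod f (act quot_mod g x)"
    using f g xy by (simp add: rep_m_rep m_dualC m_mul)
next
  show "zer quot_mod \<in> carr quot_mod" using zero_dualC by simp
  fix x assume "x \<in> carr quot_mod"
  thus "act quot_mod eps x = x" using carr_quot_modD[of x] m_eps_left by simp
qed

lemma simple_quot_mod: "simple_on sc quot_mod"
  unfolding simple_on_def
proof (intro conjI allI impI)
  have "rep eps \<noteq> rep (\<lambda>c. 0)" using rep_eq_iff[OF eps_dualC zero_dualC] eps_notin by (simp add: eqv_def)
  thus "carr quot_mod \<noteq> {zer quot_mod}" using eps_dualC zero_dualC by auto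
next
  fix N assume "submod sc quot_mod N"
  hence N: "N \<subseteq> carr quot_mod" "zer quot_mod \<in> N" "\<And>x y. x \<in> N \<Longrightarrow> y \<in> N \<Longrightarrow> pls quot_mod x y \<in> N"
    "\<And>f x. f \<in> dualC sc \<Longrightarrow> x \<in> N \<Longrightarrow> act quot_mod f x \<in> N"
    unfolding submod_def by auto
  define L' where "L' = {f \<in> dualC sc. rep f \<in> N}"
  have "ideal L'"
  proof (rule idealI)
    show "L' \<subseteq> dualC sc" unfolding L'_def by blast
    show "(\<lambda>c. 0) \<in> L'" unfolding L'_def using zero_dualC N(2) by simp
    show "(\<lambda>c. f c + g c) \<in> L'" if "f \<in> L'" "g \<in> L'" for f g
      using that N(3)[of "rep f" "rep g"] add_dualC unfolding L'_def by (simp add: rep_add_rep rep_add_rep')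
    show "m g f \<in> L'" if "g \<in> dualC sc" "f \<in> L'" for g f
      using that N(4)[of g "rep f"] m_dualC unfolding L'_def by (simp add: rep_m_rep)
  qed
  moreover have "L \<subseteq> L'"
    using rep_cong[of _ "\<lambda>c. 0"] N(2) L_dualC unfolding L'_def eqv_def by auto
  ultimately consider "L' = L" | "eps \<in> L'" using maximal by blast
  thus "N = {zer quot_mod} \<or> N = carr quot_mod"
  proof cases
    case 1
    have "n = zer quot_mod" if n: "n \<in> N" for n
    proof -
      obtain f where f: "f \<in> dualC sc" "n = rep f" using N(1) n by auto
      hence "f \<in> L" using 1 n rep_rep unfolding L'_def by auto
      thus ?thesis using f(2) rep_cong[of f "\<lambda>c. 0"] by (simp add: eqv_def)
    qed
    thus ?thesis using N(2) by blast
  next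
    case 2
    have "rep g \<in> N" if "g \<in> dualC sc" for g
      using N(4)[OF that, of "rep eps"] 2 that m_eps_right eps_dualC unfolding L'_def
        by (simp add: rep_m_rep)
    thus ?thesis using N(1) by auto
  qed
qed

lemma eps_class_not_annihilated:
  assumes j: "j \<in> L" "\<forall>c\<in>set cs. j c = eps c"
  shows "\<exists>f\<in>dualC sc. (\<forall>c\<in>set cs. f c = 0) \<and> act quot_mod f (rep eps) \<noteq> zer quot_mod"
proof -
  define f where "f = (\<lambda>c. eps c - j c)"
  have f_dualC: "f \<in> dualC sc" unfolding f_def using diff_dualC eps_dualC j(1) L_dualC by blast
  have "act quot_mod f (rep eps) \<noteq> zer quot_mod"
  proof
    assume "act quot_mod f (rep eps) = zer quot_mod"
    hence "rep f = rep (\<lambda>c. 0)" using f_dualC eps_dualC by (simp add: rep_m_rep m_eps_right)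
    hence "f \<in> L" using rep_eq_iff[OF f_dualC zero_dualC] by (simp add: eqv_def)
    hence "(\<lambda>c. f c + j c) \<in> L" using add_L j(1) by blast
    thus False using eps_notin by (simp add: f_def)
  qed
  moreover have "\<forall>c\<in>set cs. f c = 0" using j(2) by (simp add: f_def)
  ultimately show ?thesis using f_dualC by blast
qed

lemma pls_quot_mod_zer: "pls quot_mod (zer quot_mod) (zer quot_mod) = zer quot_mod"
  by (simp only: quot_mod_simps rep_add_rep[OF zero_dualC] rep_add_rep'[OF zero_dualC]) simp

lemma msum_quot_mod_vanishing:
  assumes "\<forall>c\<in>g ` set xs. f c = 0"
  shows "msum quot_mod (map (\<lambda>p. msc eps quot_mod (f (g p)) (h p)) xs) = zer quot_mod"
  using assms
proof (induct xs)
  case (Cons p xs)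
  hence "msc eps quot_mod (f (g p)) (h p) = zer quot_mod" by (simp add: msc_def m_zero_left)
  with Cons pls_quot_mod_zer show ?case by (simp only: msum_def list.map foldr.simps o_apply) simp
qed (simp add: msum_def)

lemma not_rational_quot_mod:
  assumes dense: "\<And>cs. \<exists>j\<in>L. \<forall>c\<in>set cs. j c = eps c"
  shows "\<not> rational_left sc delta eps quot_mod" and "\<not> rational_right sc delta eps quot_mod"
proof -
  have no_finite_support: False
    if act: "\<And>f. f \<in> dualC sc \<Longrightarrow>
      act quot_mod f (rep eps) = msum quot_mod (map (\<lambda>p. msc eps quot_mod (f (g p)) (h p)) xs)"
    for g h and xs :: "'b list"
  proof -
    obtain j where j: "j \<in> L" "\<forall>c\<in>set (map g xs). j c = eps c" using dense by blast
    from eps_class_not_annihilated[OF j]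
    obtain f where f: "f \<in> dualC sc" "\<forall>c\<in>g ` set xs. f c = 0" "act quot_mod f (rep eps) \<noteq> zer quot_mod"
      by auto
    thus False using act[OF f(1)] msum_quot_mod_vanishing[OF f(2)] by simp
  qed
  have eps_class: "rep eps \<in> carr quot_mod" using eps_dualC by simp
  show "\<not> rational_left sc delta eps quot_mod"
  proof
    assume "rational_left sc delta eps quot_mod"
    then obtain rho where rho: "\<And>f x. f \<in> dualC sc \<Longrightarrow> x \<in> carr quot_mod \<Longrightarrow>
        act quot_mod f x = msum quot_mod (map (\<lambda>(u,c). msc eps quot_mod (f c) u) (rho x))"
      unfolding rational_left_def by blast
    show False
      by (rule no_finite_support[of snd fst "rho (rep eps)"])
        (use rho[OF _ eps_class] in \<open>simp add: case_prod_unfold\<close>)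
  qed
  show "\<not> rational_right sc delta eps quot_mod"
  proof
    assume "rational_right sc delta eps quot_mod"
    then obtain lam where lam: "\<And>f x. f \<in> dualC sc \<Longrightarrow> x \<in> carr quot_mod \<Longrightarrow>
        act quot_mod f x = msum quot_mod (map (\<lambda>(c,u). msc eps quot_mod (f c) u) (lam x))"
      unfolding rational_right_def by blast
    show False
      by (rule no_finite_support[of fst snd "lam (rep eps)"])
        (use lam[OF _ eps_class] in \<open>simp add: case_prod_unfold\<close>)
  qed
qed

end

context coalg begin

lemma self_action_conv: "self_action sc delta eps (conv delta) (conv delta)"
  by unfold_locales
    (auto simp: conv_dualC conv_add_left conv_add_right conv_diff_right conv_zero_left conv_eps_left
      conv_eps_right conv_assoc dualCD conv_eps_scale_left[of _ "-1", simplified])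

lemma self_action_conv_op: "self_action sc delta eps (\<lambda>g f. conv delta f g) (\<lambda>f g. conv delta g f)"
  by unfold_locales
    (auto simp: conv_dualC conv_add_left conv_add_right conv_diff_left conv_zero_right conv_eps_left
      conv_eps_right conv_assoc dualCD conv_eps_scale_right[of _ "-1", simplified])

end

context infinitely_many_simples begin

lemma exists_maximal_ideal_over_cofinite_ann:
  assumes A: "self_action sc delta eps m mul"
    and m_closed: "\<And>g f. g \<in> dualC sc \<Longrightarrow> f \<in> cofinite_ann \<Longrightarrow> m g f \<in> cofinite_ann"
  shows "\<exists>L. maximal_ideal sc delta eps m mul L \<and> cofinite_ann \<subseteq> L"
proof -
  interpret A: self_action sc delta eps m mul by (rule A)
  have "A.ideal cofinite_ann"
    using cofinite_ann_dualC zero_cofinite_ann add_cofinite_ann m_closed by (intro A.idealI) auto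
  then obtain L where L: "A.ideal L" "cofinite_ann \<subseteq> L" "eps \<notin> L"
    "\<forall>L'. A.ideal L' \<and> L \<subseteq> L' \<and> eps \<notin> L' \<longrightarrow> L' = L"
    using A.exists_maximal_ideal eps_notin_cofinite_ann by blast
  hence "maximal_ideal sc delta eps m mul L"
    by (intro maximal_ideal.intro A maximal_ideal_axioms.intro) auto
  thus ?thesis using L(2) by blast
qed

lemma exists_simple_nonrational_left:
  "\<exists>M :: ('c \<Rightarrow> 'k, 'c \<Rightarrow> 'k) amod. simple_left sc delta eps M \<and> \<not> rational_left sc delta eps M"
proof -
  obtain L where "maximal_ideal sc delta eps (conv delta) (conv delta) L" "cofinite_ann \<subseteq> L"
    using exists_maximal_ideal_over_cofinite_ann[OF self_action_conv] conv_cofinite_ann(1) by blast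
  then interpret Q: maximal_ideal sc delta eps "conv delta" "conv delta" L by simp
  have "simple_left sc delta eps Q.quot_mod"
    unfolding simple_left_def left_amod_def using Q.quot_mod_amod Q.simple_quot_mod by blast
  moreover have "\<not> rational_left sc delta eps Q.quot_mod"
    using Q.not_rational_quot_mod(1) cofinite_ann_dense \<open>cofinite_ann \<subseteq> L\<close> by blast
  ultimately show ?thesis by blast
qed

lemma exists_simple_nonrational_right:
  "\<exists>M :: ('c \<Rightarrow> 'k, 'c \<Rightarrow> 'k) amod. simple_right sc delta eps M \<and> \<not> rational_right sc delta eps M"
proof -
  obtain L where "maximal_ideal sc delta eps (\<lambda>g f. conv delta f g) (\<lambda>f g. conv delta g f) L"
    and "cofinite_ann \<subseteq> L"
    using exists_maximal_ideal_over_cofinite_ann[OF self_action_conv_op] conv_cofinite_ann(2) by blast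
  then interpret Q: maximal_ideal sc delta eps "\<lambda>g f. conv delta f g" "\<lambda>f g. conv delta g f" L by simp
  have "simple_right sc delta eps Q.quot_mod"
    unfolding simple_right_def right_amod_def using Q.quot_mod_amod Q.simple_quot_mod by blast
  moreover have "\<not> rational_right sc delta eps Q.quot_mod"
    using Q.not_rational_quot_mod(2) cofinite_ann_dense \<open>cofinite_ann \<subseteq> L\<close> by blast
  ultimately show ?thesis by blast
qed

end

theorem lemma6p1:
  fixes sc :: "'k::field \<Rightarrow> 'c::ab_group_add \<Rightarrow> 'c"
    and delta :: "'c \<Rightarrow> ('c \<times> 'c) list"
    and eps :: "'c \<Rightarrow> 'k"
  assumes "coalgebra sc delta eps"
    and "\<exists>S :: ('c \<Rightarrow> 'k, 'm) amod set. infinite S \<and>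
           (\<forall>M\<in>S. simple_right sc delta eps M \<and> rational_right sc delta eps M) \<and>
           (\<forall>M\<in>S. \<forall>N\<in>S. M \<noteq> N \<longrightarrow> \<not> mod_iso sc M N)"
  shows "(\<exists>M :: ('c \<Rightarrow> 'k, 'c \<Rightarrow> 'k) amod. simple_left sc delta eps M \<and> \<not> rational_left sc delta eps M)
       \<and> (\<exists>M :: ('c \<Rightarrow> 'k, 'c \<Rightarrow> 'k) amod. simple_right sc delta eps M \<and> \<not> rational_right sc delta eps M)"
proof -
  obtain S :: "('c \<Rightarrow> 'k, 'm) amod set" where S: "infinite S"
    "\<forall>M\<in>S. simple_right sc delta eps M \<and> rational_right sc delta eps M"
    "\<forall>M\<in>S. \<forall>N\<in>S. M \<noteq> N \<longrightarrow> \<not> mod_iso sc M N"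
    using assms(2) by blast
  interpret infinitely_many_simples sc delta eps S
    using assms(1) S by unfold_locales auto
  show ?thesis using exists_simple_nonrational_left exists_simple_nonrational_right by blast
qed

end
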